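(* Let $\Sigma\in\mathbb{R}^{p\times p}$ be positive definite, $\mathbf{X}\in\mathbb{R}^{n\times p}$ with i.i.d. $\mathcal{N}_p(0,\Sigma)$ rows, $\rho_\lambda:[0,\infty)\to[0,\infty)$ a regularizer, and $\hat B$ a global minimizer of $Q$ over $\mathbb{D}$. Let $C>0$ and $\delta_0>0$, assume $n>4(C+1)(d+1)\log p$ with $d=d(\Sigma)$, and let $\pi_0$ be a minimum-trace permutation with $$\frac{\rho_\lambda(\tilde B(\pi_0))}{\operatorname{tr}\tilde\Omega(\pi_0)}\ge\frac{1}{\delta_0}\sqrt{\frac{50(C+1)(d+1)\log p}{n}}.$$ Then for any $\hat\pi\in\hat\Pi$, $$\Pr\Big(\frac{1}{2n}\|\mathbf{X}-\mathbf{X}\tilde B(\pi_0)\|_F^2-\frac{1}{2n}\|\mathbf{X}-\mathbf{X}\tilde B(\hat\pi)\|_F^2>\delta_0\,\rho_\lambda(\tilde B(\pi_0))\Big)\le2e^{-C(d+1)\log p}.$$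
   Context: Setup. $\mathbb{D}$: real $p\times p$ matrices whose directed graph (edge $i\to j$ iff $b_{ij}\ne0$) is acyclic. For a permutation $\pi$, $(P_\pi A)_{ij}=a_{\pi(i)\pi(j)}$; write uniquely $P_\pi\Sigma^{-1}=(I-L)D^{-1}(I-L)^T$ ($L$ strictly lower triangular, $D$ positive diagonal), $\tilde B(\pi)=P_{\pi^{-1}}L$, $\tilde\Omega(\pi)=P_{\pi^{-1}}D$, columns $\tilde\beta_j(\pi)$. $\mathbb{D}[\pi]=\{B\in\mathbb{D}:P_\pi B\text{ lower triangular}\}$; $\hat\Pi=\{\pi:\hat B\in\mathbb{D}[\pi]\}$. $\rho_\lambda(B)=\sum_{i,j}\rho_\lambda(|b_{ij}|)$; $Q(B)=\frac1{2n}\|\mathbf{X}-\mathbf{X}B\|_F^2+\rho_\lambda(B)$. Minimum-trace permutation: any $\pi_0\in\arg\min_\pi\operatorname{tr}\tilde\Omega(\pi)$. $d(\Sigma)=\max_{\pi,j}\|\tilde\beta_j(\pi)\|_0$. *)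

theory Defs
  imports "HOL-Probability.Probability"
begin

(* Indices are the elements of a finite linearly ordered type 'p (p = CARD('p));
   the linear order plays the role of the order 1 < 2 < ... < p. *)

definition pos_def_mat :: "real^'p^'p \<Rightarrow> bool" where
  "pos_def_mat S \<longleftrightarrow> transpose S = S \<and> (\<forall>x. x \<noteq> 0 \<longrightarrow> x \<bullet> (S *v x) > 0)"

definition gauss_density :: "real^('p::finite)^'p \<Rightarrow> real^'p \<Rightarrow> real" where
  "gauss_density S x =
     (2 * pi) powr (- real CARD('p) / 2) * det S powr (-1/2) * exp (- (x \<bullet> (matrix_inv S *v x)) / 2)"

definition perm_mat :: "('p::finite \<Rightarrow> 'p) \<Rightarrow> 'a^'p^'p \<Rightarrow> 'a^'p^'p" where
  "perm_mat \<pi> A = (\<chi> i j. A $ \<pi> i $ \<pi> j)"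

definition strictly_lower :: "real^('p::{finite,linorder})^('p::{finite,linorder}) \<Rightarrow> bool" where
  "strictly_lower L \<longleftrightarrow> (\<forall>i j. i \<le> j \<longrightarrow> L $ i $ j = 0)"

definition lower_tri :: "real^('p::{finite,linorder})^('p::{finite,linorder}) \<Rightarrow> bool" where
  "lower_tri L \<longleftrightarrow> (\<forall>i j. i < j \<longrightarrow> L $ i $ j = 0)"

definition pos_diag :: "real^('p::finite)^'p \<Rightarrow> bool" where
  "pos_diag D \<longleftrightarrow> (\<forall>i j. i \<noteq> j \<longrightarrow> D $ i $ j = 0) \<and> (\<forall>i. D $ i $ i > 0)"

definition LD_fact :: "real^('p::{finite,linorder})^('p::{finite,linorder}) \<Rightarrow> (('p::{finite,linorder}) \<Rightarrow> ('p::{finite,linorder})) \<Rightarrow> (real^('p::{finite,linorder})^('p::{finite,linorder})) \<times> (real^('p::{finite,linorder})^('p::{finite,linorder}))" where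
  "LD_fact S \<pi> = (THE (L, D). strictly_lower L \<and> pos_diag D \<and>
       perm_mat \<pi> (matrix_inv S) = (mat 1 - L) ** matrix_inv D ** transpose (mat 1 - L))"

definition Btil :: "real^('p::{finite,linorder})^('p::{finite,linorder}) \<Rightarrow> (('p::{finite,linorder}) \<Rightarrow> ('p::{finite,linorder})) \<Rightarrow> real^('p::{finite,linorder})^('p::{finite,linorder})" where
  "Btil S \<pi> = perm_mat (inv \<pi>) (fst (LD_fact S \<pi>))"

definition Omtil :: "real^('p::{finite,linorder})^('p::{finite,linorder}) \<Rightarrow> (('p::{finite,linorder}) \<Rightarrow> ('p::{finite,linorder})) \<Rightarrow> real^('p::{finite,linorder})^('p::{finite,linorder})" where
  "Omtil S \<pi> = perm_mat (inv \<pi>) (snd (LD_fact S \<pi>))"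

definition min_trace_perm :: "real^('p::{finite,linorder})^('p::{finite,linorder}) \<Rightarrow> (('p::{finite,linorder}) \<Rightarrow> ('p::{finite,linorder})) \<Rightarrow> bool" where
  "min_trace_perm S \<pi>0 \<longleftrightarrow> \<pi>0 permutes UNIV \<and>
     (\<forall>\<pi>. \<pi> permutes UNIV \<longrightarrow> trace (Omtil S \<pi>0) \<le> trace (Omtil S \<pi>))"

definition dmax :: "real^('p::{finite,linorder})^('p::{finite,linorder}) \<Rightarrow> nat" where
  "dmax S = Max {card {i. Btil S \<pi> $ i $ j \<noteq> 0} | \<pi> j. \<pi> permutes (UNIV :: 'p set)}"

definition DAGs :: "(real^('p::finite)^'p) set" where
  "DAGs = {B. acyclic {(i, j). B $ i $ j \<noteq> 0}}"

definition DAGs_perm :: "(('p::{finite,linorder}) \<Rightarrow> ('p::{finite,linorder})) \<Rightarrow> (real^('p::{finite,linorder})^('p::{finite,linorder})) set" where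
  "DAGs_perm \<pi> = {B \<in> DAGs. lower_tri (perm_mat \<pi> B)}"

definition Pi_hat :: "real^('p::{finite,linorder})^('p::{finite,linorder}) \<Rightarrow> (('p::{finite,linorder}) \<Rightarrow> ('p::{finite,linorder})) set" where
  "Pi_hat Bh = {\<pi>. \<pi> permutes UNIV \<and> Bh \<in> DAGs_perm \<pi>}"

definition pen :: "(real \<Rightarrow> real) \<Rightarrow> real^('p::finite)^'p \<Rightarrow> real" where
  "pen \<rho> B = (\<Sum>i\<in>UNIV. \<Sum>j\<in>UNIV. \<rho> \<bar>B $ i $ j\<bar>)"

(* data matrix X with rows X 0, ..., X (n-1);  (1/(2n)) ||X - X B||_F^2 *)
definition lossF :: "nat \<Rightarrow> (nat \<Rightarrow> real^'p::finite) \<Rightarrow> real^'p^'p \<Rightarrow> real" where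
  "lossF n X B = (1 / (2 * real n)) * (\<Sum>i<n. (norm (X i - X i v* B))\<^sup>2)"

definition Qobj :: "nat \<Rightarrow> (nat \<Rightarrow> real^'p::finite) \<Rightarrow> (real \<Rightarrow> real) \<Rightarrow> real^'p^'p \<Rightarrow> real" where
  "Qobj n X \<rho> B = lossF n X B + pen \<rho> B"

end

theory Submission
  imports Defs
begin

text \<open>Write \<open>v\<^sub>j(\<pi>)\<close> for column \<open>j\<close> of \<open>I - B(\<pi>)\<close>. The loss of \<open>B(\<pi>)\<close> is
  \<open>(2n)\<^sup>-\<^sup>1 \<Sum>\<^sub>j \<Sum>\<^sub>i (X\<^sub>i \<bullet> v\<^sub>j(\<pi>))\<^sup>2\<close>, and since \<open>I - B(\<pi>)\<close> is a unit triangular matrix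
  diagonalising \<open>\<Sigma>\<close>, each \<open>X\<^sub>i \<bullet> v\<^sub>j(\<pi>)\<close> is \<open>N(0, \<omega>\<^sub>j(\<pi>))\<close>, so every column statistic is a scaled
  \<open>\<chi>\<^sup>2\<^sub>n\<close> variable. With \<open>t = (C+1)(d+1) log p\<close> and \<open>s = (t/n)\<^sup>1\<^sup>/\<^sup>2\<close>, Chernoff bounds make each
  statistic of \<open>\<pi>\<^sub>0\<close> at most \<open>n(1+4s)\<omega>\<^sub>j(\<pi>\<^sub>0)\<close> and each statistic of any fixed \<open>\<pi>\<close> at least
  \<open>n(1-3s)\<omega>\<^sub>j(\<pi>)\<close>, up to probability \<open>e\<^sup>-\<^sup>t\<close>. The estimated permutation is random, but \<open>v\<^sub>j(\<pi>)\<close>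
  is determined by the support of \<open>\<beta>\<^sub>j(\<pi>)\<close>, so only \<open>p\<^sup>d\<close> vectors per column occur and a union
  bound over \<open>p(1 + p\<^sup>d)\<close> events applies. Outside them the minimal trace of \<open>\<pi>\<^sub>0\<close> bounds the loss
  gap by \<open>7 s tr \<Omega>(\<pi>\<^sub>0)\<close>, which the hypothesis on the penalty turns into \<open>\<delta>\<^sub>0 \<rho>(B(\<pi>\<^sub>0))\<close>.\<close>

section \<open>Positive definite matrices and the LDL factorisation\<close>

lemma matrix_inv_eq:
  fixes A B :: "real^'n^'n"
  assumes "A ** B = mat 1"
  shows "matrix_inv A = B"
proof -
  have "\<exists>A'. A ** A' = mat 1 \<and> A' ** A = mat 1"
    using assms matrix_left_right_inverse by blast
  then have inv: "A ** matrix_inv A = mat 1 \<and> matrix_inv A ** A = mat 1"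
    unfolding matrix_inv_def by (rule someI_ex)
  have "matrix_inv A = matrix_inv A ** (A ** B)" by (simp add: assms)
  also have "\<dots> = B" using inv by (simp add: matrix_mul_assoc)
  finally show ?thesis .
qed

lemma sum_UNIV_eq_single:
  fixes f :: "'a::finite \<Rightarrow> real"
  assumes "\<And>b. b \<noteq> a \<Longrightarrow> f b = 0"
  shows "(\<Sum>b\<in>UNIV. f b) = f a"
  using assms by (subst sum.remove[of _ a]) (auto intro!: sum.neutral)

lemma pos_def_mat_eq_0:
  assumes "pos_def_mat G" and "\<And>i. x $ i = 0 \<or> (G *v x) $ i = 0"
  shows "x = 0"
proof -
  have "x \<bullet> (G *v x) = (\<Sum>i\<in>UNIV. x $ i * (G *v x) $ i)" by (simp add: inner_vec_def)
  also have "\<dots> = 0" using assms(2) by (intro sum.neutral) (metis mult_zero_left mult_zero_right)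
  finally show ?thesis using assms(1) unfolding pos_def_mat_def by (metis less_irrefl)
qed

lemma pos_def_mat_inverse:
  fixes G :: "real^'n^'n"
  assumes "pos_def_mat G"
  shows "G ** matrix_inv G = mat 1" "matrix_inv G ** G = mat 1"
proof -
  have "\<forall>x. G *v x = 0 \<longrightarrow> x = 0" using pos_def_mat_eq_0[OF assms] by (metis zero_index)
  then obtain B where B: "B ** G = mat 1" using matrix_left_invertible_ker by blast
  then have GB: "G ** B = mat 1" using matrix_left_right_inverse by blast
  with B show "G ** matrix_inv G = mat 1" "matrix_inv G ** G = mat 1"
    using matrix_inv_eq[OF GB] by auto
qed

lemma pos_def_mat_masked_solve:
  fixes G :: "real^'n^'n"
  assumes pd: "pos_def_mat G"
  obtains l where "\<And>i. \<not> P i \<Longrightarrow> l $ i = 0" "\<And>i. P i \<Longrightarrow> (G *v l) $ i = b $ i"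
proof -
  define M :: "real^'n^'n" where
    "M = (\<chi> i j. if P i then (if P j then G $ i $ j else 0) else (if i = j then 1 else 0))"
  have M_out: "\<not> P i \<Longrightarrow> (M *v x) $ i = x $ i" for x i
    unfolding M_def matrix_vector_mult_def by (simp add: if_distrib[of "\<lambda>t. t * _"] cong: if_cong)
  have M_in: "P i \<Longrightarrow> (M *v x) $ i = (G *v x) $ i" if "\<And>j. \<not> P j \<Longrightarrow> x $ j = 0" for x i
    using that unfolding M_def matrix_vector_mult_def by (auto intro!: sum.cong)
  have "\<forall>x. M *v x = 0 \<longrightarrow> x = 0"
  proof (intro allI impI)
    fix x assume Mx: "M *v x = 0"
    have x0: "\<not> P i \<Longrightarrow> x $ i = 0" for i
      using arg_cong[OF Mx, of "\<lambda>v. v $ i"] M_out[of i x] by simp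
    have "P i \<Longrightarrow> (G *v x) $ i = 0" for i
      using arg_cong[OF Mx, of "\<lambda>v. v $ i"] M_in[of x i] x0 by simp
    then show "x = 0" using pos_def_mat_eq_0[OF pd] x0 by metis
  qed
  then obtain B where "B ** M = mat 1" using matrix_left_invertible_ker by blast
  then have MB: "M ** B = mat 1" using matrix_left_right_inverse by blast
  define l where "l = B *v (\<chi> i. if P i then b $ i else 0)"
  have Ml: "M *v l = (\<chi> i. if P i then b $ i else 0)"
    unfolding l_def by (simp add: matrix_vector_mul_assoc MB)
  have l0: "\<not> P i \<Longrightarrow> l $ i = 0" for i
    using arg_cong[OF Ml, of "\<lambda>v. v $ i"] M_out[of i l] by simp
  have "P i \<Longrightarrow> (G *v l) $ i = b $ i" for i
    using arg_cong[OF Ml, of "\<lambda>v. v $ i"] M_in[of l i] l0 by simp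
  with l0 show ?thesis by (rule that)
qed

definition unit_lower_wrt :: "('n::finite \<Rightarrow> 'b::linorder) \<Rightarrow> real^'n^'n \<Rightarrow> bool" where
  "unit_lower_wrt r U \<longleftrightarrow> (\<forall>k. U $ k $ k = 1) \<and> (\<forall>i k. r i < r k \<longrightarrow> U $ i $ k = 0)"

lemma ldl_exists:
  fixes G :: "real^('p::{finite,linorder})^('p::{finite,linorder})"
  assumes pd: "pos_def_mat G"
  obtains U where "unit_lower_wrt id U" "\<And>i k. k < i \<Longrightarrow> (G ** U) $ i $ k = 0"
proof -
  have "\<forall>k. \<exists>l. (\<forall>i. \<not> k < i \<longrightarrow> l $ i = 0) \<and> (\<forall>i. k < i \<longrightarrow> (G *v l) $ i = G $ i $ k)"
    using pos_def_mat_masked_solve[OF pd, of "\<lambda>i. _ < i" "\<chi> i. G $ i $ _"] by (metis vec_lambda_beta)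
  then obtain l where l0: "\<And>k i. \<not> k < i \<Longrightarrow> l k $ i = 0"
    and Gl: "\<And>k i. k < i \<Longrightarrow> (G *v l k) $ i = G $ i $ k"
    by metis
  define U where "U = (\<chi> i k. (if i = k then 1 else 0) - l k $ i)"
  have "unit_lower_wrt id U" by (simp add: unit_lower_wrt_def U_def l0)
  moreover have "(G ** U) $ i $ k = 0" if ki: "k < i" for i k
  proof -
    have "(G ** U) $ i $ k = (\<Sum>j\<in>UNIV. (if j = k then G $ i $ j else 0)) - (\<Sum>j\<in>UNIV. G $ i $ j * l k $ j)"
      by (simp add: matrix_matrix_mult_def U_def right_diff_distrib sum_subtractf
          if_distrib[of "\<lambda>t. _ * t"] cong: if_cong)
    also have "\<dots> = G $ i $ k - (G *v l k) $ i" by (simp add: matrix_vector_mult_def)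
    finally show ?thesis using Gl[OF ki] by simp
  qed
  ultimately show ?thesis by (rule that)
qed

text \<open>If \<open>U\<^sup>T G U\<close> is diagonal, the columns of \<open>G U\<close> vanish below the diagonal: otherwise the
  entry of \<open>G U\<close> in column \<open>k\<close> that is last in the order \<open>r\<close> would survive in \<open>U\<^sup>T G U\<close>.\<close>

lemma orthogonal_if_diagonalizes:
  fixes G U :: "real^'n^'n" and r :: "'n::finite \<Rightarrow> 'b::linorder"
  assumes r: "inj r" and U: "unit_lower_wrt r U"
    and diag: "\<And>i k. i \<noteq> k \<Longrightarrow> (transpose U ** G ** U) $ i $ k = 0"
    and ki: "r k < r i"
  shows "(G ** U) $ i $ k = 0"
proof (rule ccontr)
  define W where "W = G ** U"
  define T where "T = {i. r k < r i \<and> W $ i $ k \<noteq> 0}"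
  assume "(G ** U) $ i $ k \<noteq> 0"
  then have "r ` T \<noteq> {}" using ki by (auto simp: T_def W_def)
  then have "Max (r ` T) \<in> r ` T" by (intro Max_in) auto
  then obtain i0 where i0T: "i0 \<in> T" and i0max: "r i0 = Max (r ` T)" by auto
  have "(transpose U ** W) $ i0 $ k = (\<Sum>b\<in>UNIV. U $ b $ i0 * W $ b $ k)"
    by (simp add: matrix_matrix_mult_def transpose_def)
  also have "\<dots> = U $ i0 $ i0 * W $ i0 $ k"
  proof (rule sum_UNIV_eq_single)
    fix b assume "b \<noteq> i0"
    then have "r b < r i0 \<or> r i0 < r b" using r by (meson injD linorder_neqE)
    moreover have "r b \<le> r i0" if "b \<in> T" unfolding i0max using that by (intro Max_ge) auto
    then have "r i0 < r b \<Longrightarrow> b \<notin> T" by (meson leD)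
    ultimately show "U $ b $ i0 * W $ b $ k = 0"
      using U i0T by (auto simp: unit_lower_wrt_def T_def)
  qed
  finally have "(transpose U ** W) $ i0 $ k = W $ i0 $ k" using U by (simp add: unit_lower_wrt_def)
  moreover have "i0 \<noteq> k" using i0T by (auto simp: T_def)
  ultimately show False using diag i0T by (simp add: T_def W_def matrix_mul_assoc)
qed

lemma quadratic_form_column:
  "(transpose U ** G ** U) $ k $ k = column k U \<bullet> (G *v column k U)"
proof -
  have "(transpose U ** G ** U) $ k $ k = (\<Sum>n\<in>UNIV. \<Sum>i\<in>UNIV. U $ i $ k * G $ i $ n * U $ n $ k)"
    by (simp add: matrix_matrix_mult_def transpose_def sum_distrib_right)
  also have "\<dots> = (\<Sum>i\<in>UNIV. \<Sum>n\<in>UNIV. U $ i $ k * G $ i $ n * U $ n $ k)" by (rule sum.swap)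
  also have "\<dots> = column k U \<bullet> (G *v column k U)"
    by (simp add: column_def inner_vec_def matrix_vector_mult_def sum_distrib_left mult.assoc)
  finally show ?thesis .
qed

lemma pos_diag_if_orthogonal:
  fixes G U :: "real^'n^'n" and r :: "'n::finite \<Rightarrow> 'b::linorder"
  assumes pd: "pos_def_mat G" and r: "inj r" and U: "unit_lower_wrt r U"
    and orth: "\<And>i k. r k < r i \<Longrightarrow> (G ** U) $ i $ k = 0"
  shows "pos_diag (transpose U ** G ** U)"
proof -
  have below: "(transpose U ** G ** U) $ a $ c = 0" if "r c < r a" for a c
  proof -
    have "(transpose U ** G ** U) $ a $ c = (transpose U ** (G ** U)) $ a $ c"
      by (simp add: matrix_mul_assoc)
    also have "\<dots> = (\<Sum>b\<in>UNIV. U $ b $ a * (G ** U) $ b $ c)"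
      by (simp only: matrix_matrix_mult_def transpose_def vec_lambda_beta)
    also have "\<dots> = 0"
    proof (intro sum.neutral ballI)
      fix b
      show "U $ b $ a * (G ** U) $ b $ c = 0"
      proof (cases "r b < r a")
        case True
        then show ?thesis using U by (simp add: unit_lower_wrt_def)
      next
        case False
        then have "r c < r b" using that by simp
        then show ?thesis using orth by simp
      qed
    qed
    finally show ?thesis .
  qed
  have sym: "transpose (transpose U ** G ** U) = transpose U ** G ** U"
    using pd by (simp add: pos_def_mat_def matrix_transpose_mul matrix_mul_assoc)
  have "(transpose U ** G ** U) $ i $ k = 0" if "i \<noteq> k" for i k
  proof -
    have "r k < r i \<or> r i < r k" using r that by (meson injD linorder_neqE)
    then show ?thesis
      using below[of k i] below[of i k] arg_cong[OF sym, of "\<lambda>A. A $ i $ k"]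
      by (auto simp: transpose_def)
  qed
  moreover have "(transpose U ** G ** U) $ k $ k > 0" for k
  proof -
    have "column k U $ k = 1" using U by (simp add: column_def unit_lower_wrt_def)
    then have "column k U \<noteq> 0" by force
    then show ?thesis using pd unfolding quadratic_form_column pos_def_mat_def by auto
  qed
  ultimately show ?thesis unfolding pos_diag_def by blast
qed

definition diag_inv :: "real^'n^'n \<Rightarrow> real^'n^'n" where
  "diag_inv D = (\<chi> i j. if i = j then 1 / D $ i $ i else 0)"

lemma matrix_inv_pos_diag:
  fixes D :: "real^'n^'n"
  assumes "pos_diag D"
  shows "D ** diag_inv D = mat 1" "matrix_inv D = diag_inv D"
proof -
  have "(D ** diag_inv D) $ i $ k = (if i = k then 1 else 0)" for i k
  proof -
    have "(D ** diag_inv D) $ i $ k = (\<Sum>j\<in>UNIV. D $ i $ j * (if j = k then 1 / D $ j $ j else 0))"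
      by (simp add: matrix_matrix_mult_def diag_inv_def)
    also have "\<dots> = D $ i $ k * (1 / D $ k $ k)"
      by (subst sum_UNIV_eq_single[where a = k]) auto
    finally have "(D ** diag_inv D) $ i $ k = D $ i $ k * (1 / D $ k $ k)" .
    moreover have "D $ k $ k \<noteq> 0" using assms unfolding pos_diag_def by (metis less_irrefl)
    ultimately show ?thesis using assms unfolding pos_diag_def by auto
  qed
  then show "D ** diag_inv D = mat 1" by (simp add: vec_eq_iff mat_def)
  then show "matrix_inv D = diag_inv D" by (rule matrix_inv_eq)
qed

lemma matrix_inv_ldl:
  fixes G U :: "real^'n^'n"
  assumes "pos_diag (transpose U ** G ** U)"
  shows "matrix_inv G = U ** diag_inv (transpose U ** G ** U) ** transpose U"
proof -
  define D where "D = transpose U ** G ** U"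
  have "transpose U ** (G ** U ** diag_inv D) = mat 1"
    using matrix_inv_pos_diag(1)[OF assms] unfolding D_def by (simp add: matrix_mul_assoc)
  then have "(G ** U ** diag_inv D) ** transpose U = mat 1" using matrix_left_right_inverse by blast
  then show ?thesis unfolding D_def by (intro matrix_inv_eq) (simp add: matrix_mul_assoc)
qed

lemma ldl_of_matrix_inv:
  fixes G U D :: "real^'n^'n"
  assumes pd: "pos_def_mat G" and D: "pos_diag D"
    and eq: "matrix_inv G = U ** matrix_inv D ** transpose U"
  shows "transpose U ** G ** U = D"
proof -
  note DD = matrix_inv_pos_diag[OF D]
  have "U ** (diag_inv D ** transpose U ** G) = mat 1"
    using pos_def_mat_inverse(2)[OF pd] eq DD(2) by (simp add: matrix_mul_assoc)
  then have "(diag_inv D ** transpose U ** G) ** U = mat 1" using matrix_left_right_inverse by blast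
  then have "D ** ((diag_inv D ** transpose U ** G) ** U) = D" by simp
  then have "(D ** diag_inv D) ** (transpose U ** G ** U) = D" by (simp add: matrix_mul_assoc)
  then show ?thesis using DD(1) by simp
qed

lemma ldl_unique:
  fixes G U V :: "real^('p::{finite,linorder})^('p::{finite,linorder})"
  assumes pd: "pos_def_mat G"
    and U: "unit_lower_wrt id U" "\<And>i k. k < i \<Longrightarrow> (G ** U) $ i $ k = 0"
    and V: "unit_lower_wrt id V" "\<And>i k. k < i \<Longrightarrow> (G ** V) $ i $ k = 0"
  shows "U = V"
proof -
  have "column k U - column k V = 0" for k
  proof (rule pos_def_mat_eq_0[OF pd])
    fix i
    show "(column k U - column k V) $ i = 0 \<or> (G *v (column k U - column k V)) $ i = 0"
    proof (cases "k < i")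
      case True
      have "(G *v column k W) $ i = (G ** W) $ i $ k" for W
        by (simp add: matrix_vector_mult_def matrix_matrix_mult_def column_def)
      then show ?thesis using True U(2) V(2) by (simp add: matrix_vector_mult_diff_distrib)
    next
      case False
      then show ?thesis using U(1) V(1) unfolding unit_lower_wrt_def
        by (cases "i = k") (auto simp: column_def)
    qed
  qed
  then show ?thesis by (simp add: vec_eq_iff column_def)
qed

section \<open>The factorisation along a permutation\<close>

lemma perm_mat_mult:
  assumes p: "\<pi> permutes (UNIV::'n::finite set)"
  shows "perm_mat \<pi> (A ** B) = perm_mat \<pi> A ** perm_mat \<pi> (B::real^'n^'n)"
proof -
  have "(A ** B) $ \<pi> i $ \<pi> j = (\<Sum>k\<in>UNIV. A $ \<pi> i $ \<pi> k * B $ \<pi> k $ \<pi> j)" for i j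
    by (simp add: matrix_matrix_mult_def) (subst sum.permute[OF p], simp add: comp_def)
  then show ?thesis by (simp add: perm_mat_def matrix_matrix_mult_def vec_eq_iff)
qed

lemma perm_mat_one:
  assumes p: "\<pi> permutes (UNIV::'n::finite set)"
  shows "perm_mat \<pi> (mat 1 :: real^'n^'n) = mat 1"
  using permutes_inj[OF p] by (simp add: perm_mat_def mat_def vec_eq_iff inj_eq)

lemma perm_mat_transpose: "perm_mat \<pi> (transpose A) = transpose (perm_mat \<pi> A)"
  by (simp add: perm_mat_def transpose_def vec_eq_iff)

lemma perm_mat_diff: "perm_mat \<pi> (A - B) = perm_mat \<pi> A - perm_mat \<pi> (B::real^'n^'n)"
  by (simp add: perm_mat_def vec_eq_iff)

lemma perm_mat_inv_perm_mat:
  assumes p: "\<pi> permutes (UNIV::'n::finite set)"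
  shows "perm_mat (inv \<pi>) (perm_mat \<pi> A) = (A::real^'n^'n)"
  by (simp add: perm_mat_def vec_eq_iff permutes_inverses(1)[OF p])

lemma matrix_inv_perm_mat:
  assumes pd: "pos_def_mat S" and p: "\<pi> permutes (UNIV::'n::finite set)"
  shows "matrix_inv (perm_mat \<pi> S) = perm_mat \<pi> (matrix_inv (S::real^'n^'n))"
proof -
  have "perm_mat \<pi> S ** perm_mat \<pi> (matrix_inv S) = mat 1"
    using pos_def_mat_inverse[OF pd] by (simp add: perm_mat_mult[OF p, symmetric] perm_mat_one[OF p])
  then show ?thesis by (rule matrix_inv_eq)
qed

lemma pos_diag_perm_mat:
  assumes "\<pi> permutes (UNIV::'n::finite set)" and "pos_diag (D::real^'n^'n)"
  shows "pos_diag (perm_mat \<pi> D)"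
  using assms permutes_inj[OF assms(1)] by (auto simp: pos_diag_def perm_mat_def inj_eq)

lemma pos_def_perm_mat:
  assumes pd: "pos_def_mat S" and p: "\<pi> permutes (UNIV::'n::finite set)"
  shows "pos_def_mat (perm_mat \<pi> (S::real^'n^'n))"
  unfolding pos_def_mat_def
proof (intro conjI allI impI)
  show "transpose (perm_mat \<pi> S) = perm_mat \<pi> S"
    using pd by (simp add: perm_mat_transpose[symmetric] pos_def_mat_def)
  fix x :: "real^'n" assume x0: "x \<noteq> 0"
  define y where "y = (\<chi> a. x $ (inv \<pi> a))"
  have yx: "y $ \<pi> i = x $ i" for i by (simp add: y_def permutes_inverses(2)[OF p])
  have "y \<noteq> 0" using x0 yx by (metis vec_eq_iff zero_index)
  then have pos: "y \<bullet> (S *v y) > 0" using pd unfolding pos_def_mat_def by blast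
  have inner: "(\<Sum>b\<in>UNIV. S $ a $ b * y $ b) = (\<Sum>j\<in>UNIV. S $ a $ \<pi> j * x $ j)" for a
    by (subst sum.permute[OF p]) (simp add: comp_def yx)
  have "y \<bullet> (S *v y) = (\<Sum>a\<in>UNIV. y $ a * (\<Sum>j\<in>UNIV. S $ a $ \<pi> j * x $ j))"
    by (simp add: inner_vec_def matrix_vector_mult_def inner)
  also have "\<dots> = (\<Sum>i\<in>UNIV. x $ i * (\<Sum>j\<in>UNIV. S $ \<pi> i $ \<pi> j * x $ j))"
    by (subst sum.permute[OF p]) (simp add: comp_def yx)
  also have "\<dots> = x \<bullet> (perm_mat \<pi> S *v x)"
    by (simp add: inner_vec_def matrix_vector_mult_def perm_mat_def)
  finally show "x \<bullet> (perm_mat \<pi> S *v x) > 0" using pos by simp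
qed

lemma strictly_lower_iff_unit_lower:
  "strictly_lower (mat 1 - V) \<longleftrightarrow> unit_lower_wrt id V"
  unfolding strictly_lower_def unit_lower_wrt_def mat_def
  by (auto simp: le_less)

text \<open>Inverting \<open>P\<^sub>\<pi> \<Sigma>\<^sup>-\<^sup>1 = (I - L) D\<^sup>-\<^sup>1 (I - L)\<^sup>T\<close> gives \<open>(I - L)\<^sup>T (P\<^sub>\<pi> \<Sigma>) (I - L) = D\<close>: the factor
  \<open>I - L\<close> is the unit triangular matrix that diagonalises the permuted covariance.\<close>

lemma LD_fact_eq:
  fixes S :: "real^('p::{finite,linorder})^('p::{finite,linorder})"
  assumes pd: "pos_def_mat S" and p: "\<pi> permutes UNIV"
  obtains U where "unit_lower_wrt id U" "\<And>i k. k < i \<Longrightarrow> (perm_mat \<pi> S ** U) $ i $ k = 0"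
    "LD_fact S \<pi> = (mat 1 - U, transpose U ** perm_mat \<pi> S ** U)"
proof -
  define G where "G = perm_mat \<pi> S"
  have Gpd: "pos_def_mat G" unfolding G_def by (rule pos_def_perm_mat[OF pd p])
  obtain U where U: "unit_lower_wrt id U" and orth: "\<And>i k. k < i \<Longrightarrow> (G ** U) $ i $ k = 0"
    using ldl_exists[OF Gpd] by blast
  define D where "D = transpose U ** G ** U"
  have D: "pos_diag D" unfolding D_def by (rule pos_diag_if_orthogonal[OF Gpd _ U]) (simp_all add: orth)
  have invG: "perm_mat \<pi> (matrix_inv S) = matrix_inv G"
    unfolding G_def by (rule matrix_inv_perm_mat[OF pd p, symmetric])
  define Pr where "Pr = (\<lambda>(L, D). strictly_lower L \<and> pos_diag D \<and>
       perm_mat \<pi> (matrix_inv S) = (mat 1 - L) ** matrix_inv D ** transpose (mat 1 - L))"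
  have "Pr (mat 1 - U, D)"
    using U D matrix_inv_ldl[OF D[unfolded D_def]] matrix_inv_pos_diag(2)[OF D]
    by (simp add: Pr_def strictly_lower_iff_unit_lower invG D_def)
  moreover have "LD = (mat 1 - U, D)" if "Pr LD" for LD
  proof -
    obtain L D' where LD: "LD = (L, D')" by fastforce
    define V where "V = mat 1 - L"
    have V: "unit_lower_wrt id V" and D': "pos_diag D'"
      and eq: "matrix_inv G = V ** matrix_inv D' ** transpose V"
      using that invG unfolding Pr_def LD V_def by (auto simp: strictly_lower_iff_unit_lower[symmetric])
    have VGV: "transpose V ** G ** V = D'" by (rule ldl_of_matrix_inv[OF Gpd D' eq])
    have "V = U"
    proof (rule ldl_unique[OF Gpd V _ U orth])
      show "(G ** V) $ i $ k = 0" if "k < i" for i k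
        using orthogonal_if_diagonalizes[of id V G k i] V VGV D' that by (simp add: pos_diag_def)
    qed
    then show ?thesis using VGV unfolding LD D_def V_def by auto
  qed
  ultimately have "LD_fact S \<pi> = (mat 1 - U, D)"
    unfolding LD_fact_def Pr_def[symmetric] by (rule the_equality)
  then show ?thesis using that U orth unfolding G_def D_def by blast
qed

lemma Btil_ldl:
  fixes S :: "real^('p::{finite,linorder})^('p::{finite,linorder})"
  assumes pd: "pos_def_mat S" and p: "\<pi> permutes UNIV"
  shows "unit_lower_wrt (inv \<pi>) (mat 1 - Btil S \<pi>)"
    and "transpose (mat 1 - Btil S \<pi>) ** S ** (mat 1 - Btil S \<pi>) = Omtil S \<pi>"
    and "pos_diag (Omtil S \<pi>)"
proof -
  obtain U where U: "unit_lower_wrt id U"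
    and orth: "\<And>i k. k < i \<Longrightarrow> (perm_mat \<pi> S ** U) $ i $ k = 0"
    and LD: "LD_fact S \<pi> = (mat 1 - U, transpose U ** perm_mat \<pi> S ** U)"
    using LD_fact_eq[OF pd p] by blast
  have p': "inv \<pi> permutes UNIV" using permutes_inv[OF p] .
  have I_Btil: "mat 1 - Btil S \<pi> = perm_mat (inv \<pi>) U"
    by (simp add: Btil_def LD perm_mat_diff perm_mat_one[OF p'])
  then show "unit_lower_wrt (inv \<pi>) (mat 1 - Btil S \<pi>)"
    using U by (simp add: unit_lower_wrt_def perm_mat_def)
  have D: "pos_diag (transpose U ** perm_mat \<pi> S ** U)"
    by (rule pos_diag_if_orthogonal[OF pos_def_perm_mat[OF pd p] _ U]) (simp_all add: orth)
  have Om: "Omtil S \<pi> = perm_mat (inv \<pi>) (transpose U ** perm_mat \<pi> S ** U)"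
    by (simp add: Omtil_def LD)
  then show "pos_diag (Omtil S \<pi>)" using pos_diag_perm_mat[OF p' D] by simp
  show "transpose (mat 1 - Btil S \<pi>) ** S ** (mat 1 - Btil S \<pi>) = Omtil S \<pi>"
    unfolding Om I_Btil
    by (simp add: perm_mat_mult[OF p'] perm_mat_transpose perm_mat_inv_perm_mat[OF p])
qed

lemma Btil_orthogonal:
  fixes S :: "real^('p::{finite,linorder})^('p::{finite,linorder})"
  assumes pd: "pos_def_mat S" and p: "\<pi> permutes UNIV" and ba: "inv \<pi> b < inv \<pi> a"
  shows "(S ** (mat 1 - Btil S \<pi>)) $ a $ b = 0"
  using orthogonal_if_diagonalizes[OF permutes_inj[OF permutes_inv[OF p]] Btil_ldl(1)[OF pd p] _ ba]
    Btil_ldl(2,3)[OF pd p] by (simp add: pos_diag_def)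

lemma Btil_diag_eq_0:
  assumes "pos_def_mat S" and "\<pi> permutes UNIV"
  shows "Btil S \<pi> $ j $ j = 0"
  using Btil_ldl(1)[OF assms] by (simp add: unit_lower_wrt_def mat_def)

text \<open>\<open>col_resid S \<pi> j\<close> is the vector \<open>v\<^sub>j(\<pi>) = e\<^sub>j - \<beta>\<^sub>j(\<pi>)\<close>; the residuals of column \<open>j\<close> are the
  projections \<open>X\<^sub>i \<bullet> v\<^sub>j(\<pi>)\<close>.\<close>

definition col_resid ::
    "real^('p::{finite,linorder})^('p::{finite,linorder}) \<Rightarrow> (('p::{finite,linorder}) \<Rightarrow> ('p::{finite,linorder})) \<Rightarrow> ('p::{finite,linorder}) \<Rightarrow> real^('p::{finite,linorder})" where
  "col_resid S \<pi> j = column j (mat 1 - Btil S \<pi>)"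

lemma col_resid_nth: "col_resid S \<pi> j $ i = (if i = j then 1 else 0) - Btil S \<pi> $ i $ j"
  by (simp add: col_resid_def column_def mat_def)

lemma quadratic_form_col_resid:
  assumes "pos_def_mat S" and "\<pi> permutes UNIV"
  shows "col_resid S \<pi> j \<bullet> (S *v col_resid S \<pi> j) = Omtil S \<pi> $ j $ j"
  using Btil_ldl(2)[OF assms] quadratic_form_column[of "mat 1 - Btil S \<pi>" S j]
  unfolding col_resid_def by simp

lemma col_resid_orthogonal:
  assumes pd: "pos_def_mat S" and p: "\<pi> permutes UNIV" and a: "Btil S \<pi> $ a $ j \<noteq> 0"
  shows "(S *v col_resid S \<pi> j) $ a = 0"
proof -
  have "a \<noteq> j" using a Btil_diag_eq_0[OF pd p] by auto
  then have "inv \<pi> a \<noteq> inv \<pi> j" by (metis p permutes_inverses(1))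
  moreover have "(mat 1 - Btil S \<pi>) $ a $ j \<noteq> 0" using a \<open>a \<noteq> j\<close> by (simp add: mat_def)
  then have "\<not> inv \<pi> a < inv \<pi> j" using Btil_ldl(1)[OF pd p] unfolding unit_lower_wrt_def by blast
  ultimately have "inv \<pi> j < inv \<pi> a" by simp
  then show ?thesis using Btil_orthogonal[OF pd p]
    by (simp add: col_resid_def matrix_vector_mult_def matrix_matrix_mult_def column_def)
qed

text \<open>The support of \<open>\<beta>\<^sub>j(\<pi>)\<close> determines it: off the support \<open>v\<^sub>j(\<pi>)\<close> is prescribed and on it
  \<open>\<Sigma> v\<^sub>j(\<pi>)\<close> vanishes, so the difference of two such columns is \<open>\<Sigma>\<close>-orthogonal to itself.\<close>

lemma col_resid_eq_if_same_support:
  assumes pd: "pos_def_mat S" and p: "\<pi> permutes UNIV" and p': "\<pi>' permutes UNIV"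
    and supp: "\<And>i. Btil S \<pi> $ i $ j \<noteq> 0 \<longleftrightarrow> Btil S \<pi>' $ i $ j \<noteq> 0"
  shows "col_resid S \<pi> j = col_resid S \<pi>' j"
proof -
  have "col_resid S \<pi> j - col_resid S \<pi>' j = 0"
  proof (rule pos_def_mat_eq_0[OF pd])
    fix i
    show "(col_resid S \<pi> j - col_resid S \<pi>' j) $ i = 0 \<or>
          (S *v (col_resid S \<pi> j - col_resid S \<pi>' j)) $ i = 0"
      using col_resid_orthogonal[OF pd p, of i j] col_resid_orthogonal[OF pd p', of i j] supp[of i]
      by (cases "Btil S \<pi> $ i $ j = 0") (simp_all add: col_resid_nth matrix_vector_mult_diff_distrib)
  qed
  then show ?thesis by simp
qed

lemma card_support_Btil_le_dmax:
  assumes "\<pi> permutes (UNIV::'p::{finite,linorder} set)"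
  shows "card {i. Btil S \<pi> $ i $ j \<noteq> 0} \<le> dmax S"
proof -
  have "{card {i. Btil S \<pi> $ i $ j \<noteq> 0} | \<pi> j. \<pi> permutes (UNIV :: 'p set)}
      = (\<lambda>(\<pi>, j). card {i. Btil S \<pi> $ i $ j \<noteq> 0}) ` ({\<pi>. \<pi> permutes (UNIV::'p set)} \<times> UNIV)"
    by auto
  then have "finite {card {i. Btil S \<pi> $ i $ j \<noteq> 0} | \<pi> j. \<pi> permutes (UNIV :: 'p set)}"
    using finite_permutations[of "UNIV::'p set"] by simp
  then show ?thesis unfolding dmax_def by (rule Max_ge) (use assms in blast)
qed

lemma card_small_subsets_le:
  fixes j :: "'p::finite"
  shows "card {T::'p set. j \<notin> T \<and> card T \<le> d} \<le> CARD('p) ^ d"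
proof -
  define F where "F = (\<lambda>f. f ` {..<d} - {j})"
  have "{T::'p set. j \<notin> T \<and> card T \<le> d} \<subseteq> F ` (PiE {..<d} (\<lambda>_. UNIV))"
  proof
    fix T :: "'p set" assume "T \<in> {T. j \<notin> T \<and> card T \<le> d}"
    then have jT: "j \<notin> T" and cT: "card T \<le> d" by auto
    obtain h where h: "bij_betw h {0..<card T} T" using ex_bij_betw_nat_finite[of T] by auto
    define f where "f = restrict (\<lambda>i. if i < card T then h i else j) {..<d}"
    have "f ` {..<d} - {j} = T"
    proof
      show "f ` {..<d} - {j} \<subseteq> T" using h bij_betwE by (fastforce simp: f_def)
      show "T \<subseteq> f ` {..<d} - {j}"
      proof
        fix x assume "x \<in> T"
        then obtain i where "i \<in> {0..<card T}" "h i = x" using h by (metis bij_betw_imp_surj_on imageE)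
        then show "x \<in> f ` {..<d} - {j}" using cT jT \<open>x \<in> T\<close> by (auto simp: f_def intro!: image_eqI[of _ _ i])
      qed
    qed
    moreover have "f \<in> PiE {..<d} (\<lambda>_. UNIV)" by (simp add: f_def)
    ultimately show "T \<in> F ` (PiE {..<d} (\<lambda>_. UNIV))" unfolding F_def by blast
  qed
  then have "card {T::'p set. j \<notin> T \<and> card T \<le> d} \<le> card (F ` (PiE {..<d} (\<lambda>_. UNIV)))"
    by (intro card_mono) simp_all
  also have "\<dots> \<le> card (PiE {..<d} (\<lambda>_. (UNIV :: 'p set)))" by (rule card_image_le, rule finite_PiE) simp_all
  also have "\<dots> = CARD('p) ^ d" by (simp add: card_PiE)
  finally show ?thesis .
qed

definition col_resid_set ::
    "real^('p::{finite,linorder})^('p::{finite,linorder}) \<Rightarrow> ('p::{finite,linorder}) \<Rightarrow> (real^('p::{finite,linorder})) set" where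
  "col_resid_set S j = {col_resid S \<pi> j | \<pi>. \<pi> permutes UNIV}"

lemma finite_col_resid_set: "finite (col_resid_set S j)"
proof -
  have "col_resid_set S j = (\<lambda>\<pi>. col_resid S \<pi> j) ` {\<pi>. \<pi> permutes UNIV}"
    unfolding col_resid_set_def by auto
  then show ?thesis using finite_permutations by simp
qed

lemma card_col_resid_set_le:
  fixes S :: "real^('p::{finite,linorder})^('p::{finite,linorder})"
  assumes pd: "pos_def_mat S"
  shows "card (col_resid_set S j) \<le> CARD('p) ^ dmax S"
proof -
  define supp where "supp = (\<lambda>v. {i. i \<noteq> j \<and> (v $ i :: real) \<noteq> 0})"
  have supp_eq: "supp (col_resid S \<pi> j) = {i. Btil S \<pi> $ i $ j \<noteq> 0}" if "\<pi> permutes UNIV" for \<pi>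
    using Btil_diag_eq_0[OF pd that, of j] by (auto simp: supp_def col_resid_nth)
  have "inj_on supp (col_resid_set S j)"
  proof (rule inj_onI)
    fix v w assume "v \<in> col_resid_set S j" "w \<in> col_resid_set S j" and "supp v = supp w"
    then obtain \<pi> \<pi>' where "\<pi> permutes UNIV" "\<pi>' permutes UNIV"
      and "v = col_resid S \<pi> j" "w = col_resid S \<pi>' j"
      "{i. Btil S \<pi> $ i $ j \<noteq> 0} = {i. Btil S \<pi>' $ i $ j \<noteq> 0}"
      unfolding col_resid_set_def using supp_eq by auto
    then show "v = w" using col_resid_eq_if_same_support[OF pd] by blast
  qed
  moreover have "supp ` col_resid_set S j \<subseteq> {T. j \<notin> T \<and> card T \<le> dmax S}"
    using supp_eq card_support_Btil_le_dmax unfolding col_resid_set_def by (auto simp: supp_def)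
  ultimately have "card (col_resid_set S j) \<le> card {T::'p set. j \<notin> T \<and> card T \<le> dmax S}"
    by (metis card_image card_mono finite)
  also have "\<dots> \<le> CARD('p) ^ dmax S" by (rule card_small_subsets_le)
  finally show ?thesis .
qed

definition sum_sq_proj :: "nat \<Rightarrow> (nat \<Rightarrow> real^('p::finite)) \<Rightarrow> real^('p::finite) \<Rightarrow> real" where
  "sum_sq_proj n x v = (\<Sum>i<n. (x i \<bullet> v)\<^sup>2)"

lemma lossF_Btil:
  fixes S :: "real^('p::{finite,linorder})^('p::{finite,linorder})"
  shows "lossF n x (Btil S \<pi>) = (\<Sum>j\<in>UNIV. sum_sq_proj n x (col_resid S \<pi> j)) / (2 * real n)"
proof -
  have "(x i - x i v* Btil S \<pi>) $ j = x i \<bullet> col_resid S \<pi> j" for i j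
    by (simp add: vector_matrix_mult_def inner_vec_def col_resid_nth right_diff_distrib
        sum_subtractf if_distrib[of "\<lambda>t. _ * t"] cong: if_cong)
  moreover have "(norm v)\<^sup>2 = (\<Sum>j\<in>UNIV. (v $ j)\<^sup>2)" for v :: "real^('p::{finite,linorder})"
    unfolding power2_norm_eq_inner by (simp add: inner_vec_def power2_eq_square)
  ultimately show ?thesis by (simp add: lossF_def sum_sq_proj_def sum.swap[of _ "{..<n}"])
qed

section \<open>Gaussian integrals\<close>

lemma nn_integral_lborel_split_Basis:
  fixes h :: "'a::euclidean_space \<Rightarrow> ennreal" and e :: 'a
  assumes [measurable]: "h \<in> borel_measurable borel" and e: "e \<in> Basis"
  shows "(\<integral>\<^sup>+x. h x \<partial>lborel) = (\<integral>\<^sup>+G. (\<integral>\<^sup>+y. h ((\<Sum>b\<in>Basis - {e}. G b *\<^sub>R b) + y *\<^sub>R e) \<partial>lborel)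
           \<partial>PiM (Basis - {e}) (\<lambda>_. lborel))"
proof -
  interpret product_sigma_finite "\<lambda>_::'a. (lborel :: real measure)" by standard
  define \<Phi> where "\<Phi> = (\<lambda>F::'a \<Rightarrow> real. \<Sum>b\<in>Basis. F b *\<^sub>R b)"
  have [measurable]: "\<Phi> \<in> borel_measurable (PiM Basis (\<lambda>_. lborel))" unfolding \<Phi>_def by measurable
  have \<Phi>_upd: "\<Phi> (G(e := y)) = (\<Sum>b\<in>Basis - {e}. G b *\<^sub>R b) + y *\<^sub>R e" for G y
  proof -
    have "\<Phi> (G(e := y)) = y *\<^sub>R e + (\<Sum>b\<in>Basis - {e}. (G(e := y)) b *\<^sub>R b)"
      by (simp add: \<Phi>_def sum.remove[OF finite_Basis e])
    also have "(\<Sum>b\<in>Basis - {e}. (G(e := y)) b *\<^sub>R b) = (\<Sum>b\<in>Basis - {e}. G b *\<^sub>R b)"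
      by (rule sum.cong) auto
    finally show ?thesis by (simp only: add.commute)
  qed
  have "(\<integral>\<^sup>+x. h x \<partial>lborel) = (\<integral>\<^sup>+F. h (\<Phi> F) \<partial>PiM (insert e (Basis - {e})) (\<lambda>_. lborel))"
    unfolding \<Phi>_def by (subst lborel_eq) (simp add: nn_integral_distr insert_absorb[OF e])
  also have "\<dots> = (\<integral>\<^sup>+G. (\<integral>\<^sup>+y. h (\<Phi> (G(e := y))) \<partial>lborel) \<partial>PiM (Basis - {e}) (\<lambda>_. lborel))"
    by (rule product_nn_integral_insert) (simp_all add: insert_absorb[OF e])
  finally show ?thesis by (simp add: \<Phi>_upd)
qed

lemma nn_integral_lborel_shear:
  fixes f :: "'a::euclidean_space \<Rightarrow> ennreal" and c :: "'a \<Rightarrow> real"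
  assumes [measurable]: "f \<in> borel_measurable borel" "c \<in> borel_measurable borel"
    and e: "e \<in> Basis" and c: "\<And>x t. c (x + t *\<^sub>R e) = c x"
  shows "(\<integral>\<^sup>+x. f (x + c x *\<^sub>R e) \<partial>lborel) = (\<integral>\<^sup>+x. f x \<partial>lborel)"
proof -
  have "(\<integral>\<^sup>+y. f ((w + y *\<^sub>R e) + c (w + y *\<^sub>R e) *\<^sub>R e) \<partial>lborel) = (\<integral>\<^sup>+y. f (w + y *\<^sub>R e) \<partial>lborel)" for w
  proof -
    have "(\<lambda>y. f (w + y *\<^sub>R e)) \<in> borel_measurable borel" by measurable
    from nn_integral_real_affine[OF this, of 1 "c w"] show ?thesis
      by (simp add: c scaleR_add_left algebra_simps)
  qed
  then show ?thesis
    using nn_integral_lborel_split_Basis[OF _ e, of "\<lambda>x. f (x + c x *\<^sub>R e)"]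
      nn_integral_lborel_split_Basis[OF _ e, of f]
    by simp
qed

definition vector_matrix_mult_on :: "'n set \<Rightarrow> real^('n::finite) \<Rightarrow> real^'n^'n \<Rightarrow> real^'n" where
  "vector_matrix_mult_on J x U = (\<chi> k. if k \<in> J then (x v* U) $ k else x $ k)"

text \<open>Transforming coordinate \<open>m\<close> after the ones preceding it in the order \<open>r\<close> is a shear
  along \<open>m\<close>: the new coordinate depends only on coordinates not yet transformed.\<close>

lemma vector_matrix_mult_on_insert:
  fixes U :: "real^('n::finite)^('n::finite)" and r :: "'n \<Rightarrow> 'b::linorder"
  assumes r: "inj r" and U: "unit_lower_wrt r U" and "m \<notin> J" and J: "\<And>j. j \<in> J \<Longrightarrow> r j \<le> r m"
  defines "c \<equiv> \<lambda>z::real^'n. \<Sum>i\<in>UNIV - {m}. U $ i $ m * z $ i"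
  shows "vector_matrix_mult_on (insert m J) x U
    = vector_matrix_mult_on J x U + c (vector_matrix_mult_on J x U) *\<^sub>R axis m 1"
proof -
  have "c (vector_matrix_mult_on J x U) = c x"
    unfolding c_def
  proof (intro sum.cong refl)
    fix i assume "i \<in> UNIV - {m}"
    then have "r i \<noteq> r m" using r by (auto dest: injD)
    then have "U $ i $ m \<noteq> 0 \<Longrightarrow> i \<notin> J" using U J unfolding unit_lower_wrt_def
      by (meson linorder_neqE not_le)
    then show "U $ i $ m * vector_matrix_mult_on J x U $ i = U $ i $ m * x $ i"
      by (cases "U $ i $ m = 0") (simp_all add: vector_matrix_mult_on_def)
  qed
  moreover have "(x v* U) $ m = x $ m + c x"
  proof -
    have "(x v* U) $ m = U $ m $ m * x $ m + (\<Sum>i\<in>UNIV - {m}. U $ i $ m * x $ i)"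
      by (simp add: vector_matrix_mult_def sum.remove[of _ m] mult.commute)
    then show ?thesis using U by (simp add: c_def unit_lower_wrt_def)
  qed
  ultimately show ?thesis using \<open>m \<notin> J\<close> by (auto simp: vec_eq_iff vector_matrix_mult_on_def axis_def)
qed

text \<open>The map \<open>x \<mapsto> x v* U\<close> is a composition of shears along single coordinate axes, taken in
  the order \<open>r\<close>.\<close>

lemma nn_integral_lborel_unit_lower:
  fixes U :: "real^('n::finite)^('n::finite)" and r :: "'n \<Rightarrow> 'b::linorder"
    and f :: "real^'n \<Rightarrow> ennreal"
  assumes r: "inj r" and U: "unit_lower_wrt r U" and f: "f \<in> borel_measurable borel"
  shows "(\<integral>\<^sup>+x. f (x v* U) \<partial>lborel) = (\<integral>\<^sup>+x. f x \<partial>lborel)"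
proof -
  have partial: "\<forall>g. g \<in> borel_measurable borel \<longrightarrow>
      (\<integral>\<^sup>+x. g (vector_matrix_mult_on J x U) \<partial>lborel) = (\<integral>\<^sup>+x. g x \<partial>lborel)" for J
  proof -
    have "finite J" by simp
    then show ?thesis
    proof (induction J rule: finite_ranking_induct[where f = r])
      case empty
      then show ?case by (simp add: vector_matrix_mult_on_def)
    next
      case (insert m J)
      show ?case
      proof (cases "m \<in> J")
        case True
        then show ?thesis using insert.IH by (simp add: insert_absorb)
      next
        case False
        define c where "c = (\<lambda>z::real^'n. \<Sum>i\<in>UNIV - {m}. U $ i $ m * z $ i)"
        have [measurable]: "c \<in> borel_measurable borel" unfolding c_def by measurable
        have c: "c (x + t *\<^sub>R axis m 1) = c x" for x t
          unfolding c_def by (intro sum.cong) (auto simp: axis_def)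
        show ?thesis
        proof (intro allI impI)
          fix g :: "real^'n \<Rightarrow> ennreal" assume [measurable]: "g \<in> borel_measurable borel"
          have "(\<lambda>z. g (z + c z *\<^sub>R axis m 1)) \<in> borel_measurable borel" by measurable
          with insert.IH have "(\<integral>\<^sup>+x. g (vector_matrix_mult_on J x U
                + c (vector_matrix_mult_on J x U) *\<^sub>R axis m 1) \<partial>lborel)
              = (\<integral>\<^sup>+x. g (x + c x *\<^sub>R axis m 1) \<partial>lborel)" by blast
          then have "(\<integral>\<^sup>+x. g (vector_matrix_mult_on (insert m J) x U) \<partial>lborel)
              = (\<integral>\<^sup>+x. g (x + c x *\<^sub>R axis m 1) \<partial>lborel)"
            by (simp only: vector_matrix_mult_on_insert[OF r U False insert.hyps(2)] c_def)
          also have "\<dots> = (\<integral>\<^sup>+x. g x \<partial>lborel)" by (rule nn_integral_lborel_shear) (simp_all add: c)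
          finally show "(\<integral>\<^sup>+x. g (vector_matrix_mult_on (insert m J) x U) \<partial>lborel) = (\<integral>\<^sup>+x. g x \<partial>lborel)" .
        qed
      qed
    qed
  qed
  have "vector_matrix_mult_on UNIV x U = x v* U" for x
    by (simp add: vector_matrix_mult_on_def vec_eq_iff)
  then show ?thesis using partial[of UNIV] f by simp
qed

lemma nn_integral_lborel_prod_coordinates:
  fixes F :: "'n::finite \<Rightarrow> real \<Rightarrow> ennreal"
  assumes [measurable]: "\<And>k. F k \<in> borel_measurable borel"
  shows "(\<integral>\<^sup>+x. (\<Prod>k\<in>UNIV. F k (x $ k)) \<partial>(lborel::(real^'n) measure)) = (\<Prod>k\<in>UNIV. \<integral>\<^sup>+t. F k t \<partial>lborel)"
proof -
  define idx where "idx = (\<lambda>b::real^'n. SOME k. b = axis k 1)"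
  have idx: "idx (axis k 1) = k" for k
    unfolding idx_def by (rule some_equality) (auto simp: axis_eq_axis)
  have inj: "inj (\<lambda>k::'n. axis k (1::real))" by (auto simp: inj_def axis_eq_axis)
  have Basis: "(Basis :: (real^'n) set) = (\<lambda>k. axis k 1) ` UNIV" by (auto simp: Basis_vec_def)
  have reindex: "(\<Prod>b\<in>Basis. h b) = (\<Prod>k\<in>UNIV. h (axis k 1))" for h :: "real^'n \<Rightarrow> ennreal"
    unfolding Basis by (subst prod.reindex[OF inj]) (simp add: comp_def)
  have "(\<integral>\<^sup>+x. (\<Prod>b\<in>Basis. F (idx b) (x \<bullet> b)) \<partial>(lborel::(real^'n) measure))
      = (\<Prod>b\<in>Basis. \<integral>\<^sup>+t. F (idx b) t \<partial>lborel)"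
    by (rule nn_integral_lborel_prod) auto
  then show ?thesis unfolding reindex by (simp add: idx inner_axis)
qed

lemma nn_integral_lborel_prod_unit_lower:
  fixes U :: "real^('n::finite)^('n::finite)" and r :: "'n \<Rightarrow> 'b::linorder"
    and F :: "'n \<Rightarrow> real \<Rightarrow> ennreal"
  assumes r: "inj r" and U: "unit_lower_wrt r U"
    and [measurable]: "\<And>k. F k \<in> borel_measurable borel"
  shows "(\<integral>\<^sup>+x. (\<Prod>k\<in>UNIV. F k ((x v* U) $ k)) \<partial>lborel) = (\<Prod>k\<in>UNIV. \<integral>\<^sup>+t. F k t \<partial>lborel)"
proof -
  have "(\<lambda>z::real^'n. \<Prod>k\<in>UNIV. F k (z $ k)) \<in> borel_measurable borel" by measurable
  from nn_integral_lborel_unit_lower[OF r U this] show ?thesis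
    by (simp add: nn_integral_lborel_prod_coordinates[OF assms(3)])
qed

lemma borel_measurable_vector_matrix_nth [measurable]:
  "(\<lambda>x. (x v* A) $ k) \<in> borel_measurable (borel :: (real^('n::finite)) measure)"
proof -
  have "(\<lambda>x. (x v* A) $ k) = (\<lambda>x. x \<bullet> column k A)"
    by (simp add: fun_eq_iff vector_matrix_mult_def inner_vec_def column_def mult.commute)
  then show ?thesis by simp
qed

lemma quadratic_form_matrix_inv_ldl:
  fixes S U :: "real^('n::finite)^('n::finite)"
  assumes D: "pos_diag (transpose U ** S ** U)"
  shows "x \<bullet> (matrix_inv S *v x) = (\<Sum>k\<in>UNIV. ((x v* U) $ k)\<^sup>2 / (transpose U ** S ** U) $ k $ k)"
proof -
  define D where "D = transpose U ** S ** U"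
  define z where "z = transpose U *v x"
  have "x \<bullet> (matrix_inv S *v x) = x \<bullet> (U *v (diag_inv D *v z))"
    by (simp only: matrix_inv_ldl[OF D] D_def z_def matrix_vector_mul_assoc matrix_mul_assoc)
  also have "\<dots> = z \<bullet> (diag_inv D *v z)" by (simp add: z_def dot_lmul_matrix)
  also have "\<dots> = (\<Sum>k\<in>UNIV. z $ k * (z $ k / D $ k $ k))"
    by (simp add: inner_vec_def matrix_vector_mult_def diag_inv_def if_distrib[of "\<lambda>t. t * _"]
        cong: if_cong)
  finally show ?thesis by (simp add: D_def z_def power2_eq_square)
qed

lemma nn_integral_normal_density:
  assumes "\<sigma> > 0" shows "(\<integral>\<^sup>+t. ennreal (normal_density \<mu> \<sigma> t) \<partial>lborel) = 1"
  by (subst nn_integral_eq_integral[OF integrable_normal_density[OF assms]])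
    (auto simp: integral_normal_density[OF assms])

lemma gauss_density_eq_const_mult_prod:
  fixes S U :: "real^('n::finite)^('n::finite)"
  assumes D: "pos_diag (transpose U ** S ** U)"
  shows "gauss_density S x = ((2 * pi) powr (- real CARD('n) / 2) * det S powr (-1/2) *
      (\<Prod>k\<in>UNIV. sqrt (2 * pi * (transpose U ** S ** U) $ k $ k))) *
      (\<Prod>k\<in>UNIV. normal_density 0 (sqrt ((transpose U ** S ** U) $ k $ k)) ((x v* U) $ k))"
proof -
  define D where "D = transpose U ** S ** U"
  define z where "z = transpose U *v x"
  have Dp: "D $ k $ k > 0" for k using D unfolding D_def pos_diag_def by blast
  have "sqrt (2 * pi * D $ k $ k) * normal_density 0 (sqrt (D $ k $ k)) (z $ k)
      = exp (- ((z $ k)\<^sup>2 / D $ k $ k) / 2)" for k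
    using Dp[of k] by (simp add: normal_density_def)
  then have "(\<Prod>k\<in>UNIV. sqrt (2 * pi * D $ k $ k)) * (\<Prod>k\<in>UNIV. normal_density 0 (sqrt (D $ k $ k)) (z $ k))
      = exp (\<Sum>k\<in>UNIV. - ((z $ k)\<^sup>2 / D $ k $ k) / 2)"
    by (simp add: prod.distrib[symmetric] exp_sum)
  also have "\<dots> = exp (- (x \<bullet> (matrix_inv S *v x)) / 2)"
    unfolding quadratic_form_matrix_inv_ldl[OF D] D_def z_def by (simp add: sum_negf sum_divide_distrib)
  finally show ?thesis unfolding gauss_density_def D_def[symmetric]
    by (simp add: z_def mult.assoc)
qed

text \<open>The constant in \<open>gauss_density_eq_const_mult_prod\<close> is never computed (that would need
  \<open>det S = \<Prod>\<^sub>k D\<^sub>k\<^sub>k\<close>): after the unit triangular change of variables the product of normal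
  densities integrates to one, as does the Gaussian density by hypothesis.\<close>

lemma gauss_density_eq_prod_normal_density:
  fixes S U :: "real^('n::finite)^('n::finite)" and r :: "'n \<Rightarrow> 'b::linorder"
  assumes r: "inj r" and U: "unit_lower_wrt r U" and D: "pos_diag (transpose U ** S ** U)"
    and norm: "(\<integral>\<^sup>+x. ennreal (gauss_density S x) \<partial>lborel) = 1"
  shows "gauss_density S x =
      (\<Prod>k\<in>UNIV. normal_density 0 (sqrt ((transpose U ** S ** U) $ k $ k)) ((x v* U) $ k))"
proof -
  define nd where "nd = (\<lambda>k t. normal_density 0 (sqrt ((transpose U ** S ** U) $ k $ k)) t)"
  define \<kappa> where "\<kappa> = (2 * pi) powr (- real CARD('n) / 2) * det S powr (-1/2) *
      (\<Prod>k\<in>UNIV. sqrt (2 * pi * (transpose U ** S ** U) $ k $ k))"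
  have Dp: "(transpose U ** S ** U) $ k $ k > 0" for k using D unfolding pos_diag_def by blast
  have "\<kappa> \<ge> 0" unfolding \<kappa>_def using Dp by (intro mult_nonneg_nonneg prod_nonneg) (auto intro: less_imp_le)
  have gd: "gauss_density S x = \<kappa> * (\<Prod>k\<in>UNIV. nd k ((x v* U) $ k))" for x
    unfolding \<kappa>_def nd_def by (rule gauss_density_eq_const_mult_prod[OF D])
  have "(\<integral>\<^sup>+x. ennreal (gauss_density S x) \<partial>lborel)
      = ennreal \<kappa> * (\<integral>\<^sup>+x. (\<Prod>k\<in>UNIV. ennreal (nd k ((x v* U) $ k))) \<partial>lborel)"
    unfolding gd using \<open>\<kappa> \<ge> 0\<close>
    by (subst nn_integral_cmult[symmetric])
      (simp_all add: ennreal_mult prod_ennreal nd_def normal_density_nonneg prod_nonneg)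
  also have "\<dots> = ennreal \<kappa>"
    using nn_integral_lborel_prod_unit_lower[OF r U, of "\<lambda>k t. ennreal (nd k t)"] Dp
    by (simp add: nd_def nn_integral_normal_density)
  finally have "\<kappa> = 1" using norm \<open>\<kappa> \<ge> 0\<close> by simp
  then show ?thesis using gd nd_def by simp
qed

lemma nn_integral_gauss_density_coordinate:
  fixes S U :: "real^('n::finite)^('n::finite)" and r :: "'n \<Rightarrow> 'b::linorder"
    and g :: "real \<Rightarrow> ennreal"
  assumes r: "inj r" and U: "unit_lower_wrt r U" and D: "pos_diag (transpose U ** S ** U)"
    and norm: "(\<integral>\<^sup>+x. ennreal (gauss_density S x) \<partial>lborel) = 1"
    and [measurable]: "g \<in> borel_measurable borel"
  shows "(\<integral>\<^sup>+x. g ((x v* U) $ j) * ennreal (gauss_density S x) \<partial>lborel)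
       = (\<integral>\<^sup>+t. g t * ennreal (normal_density 0 (sqrt ((transpose U ** S ** U) $ j $ j)) t) \<partial>lborel)"
proof -
  define nd where "nd = (\<lambda>k t. ennreal (normal_density 0 (sqrt ((transpose U ** S ** U) $ k $ k)) t))"
  define F where "F = (\<lambda>k t. (if k = j then g t else 1) * nd k t)"
  have [measurable]: "F k \<in> borel_measurable borel" for k unfolding F_def nd_def by measurable
  have Dp: "(transpose U ** S ** U) $ k $ k > 0" for k using D unfolding pos_diag_def by blast
  have "g ((x v* U) $ j) * ennreal (gauss_density S x) = (\<Prod>k\<in>UNIV. F k ((x v* U) $ k))" for x
    unfolding gauss_density_eq_prod_normal_density[OF r U D norm] F_def
    by (simp add: prod.distrib prod.delta prod_ennreal nd_def normal_density_nonneg)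
  then have "(\<integral>\<^sup>+x. g ((x v* U) $ j) * ennreal (gauss_density S x) \<partial>lborel)
      = (\<Prod>k\<in>UNIV. \<integral>\<^sup>+t. F k t \<partial>lborel)"
    by (simp add: nn_integral_lborel_prod_unit_lower[OF r U])
  also have "\<dots> = (\<integral>\<^sup>+t. g t * nd j t \<partial>lborel)"
  proof -
    have "(\<integral>\<^sup>+t. F k t \<partial>lborel) = (if k = j then \<integral>\<^sup>+t. g t * nd j t \<partial>lborel else 1)" for k
      using Dp by (cases "k = j") (simp_all add: F_def nd_def nn_integral_normal_density)
    then show ?thesis by (simp add: prod.delta)
  qed
  finally show ?thesis unfolding nd_def .
qed

lemma exp_sq_mult_normal_density:
  fixes \<sigma> \<mu> t :: real
  assumes s: "\<sigma> > 0" and a: "1 - 2 * \<mu> * \<sigma>\<^sup>2 > 0"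
  shows "exp (\<mu> * t\<^sup>2) * normal_density 0 \<sigma> t
       = (1 / sqrt (1 - 2 * \<mu> * \<sigma>\<^sup>2)) * normal_density 0 (\<sigma> / sqrt (1 - 2 * \<mu> * \<sigma>\<^sup>2)) t"
proof -
  define a where "a = 1 - 2 * \<mu> * \<sigma>\<^sup>2"
  have ap: "a > 0" using a by (simp add: a_def)
  have s2: "(\<sigma> / sqrt a)\<^sup>2 = \<sigma>\<^sup>2 / a" using ap by (simp add: power_divide)
  have s2p: "\<sigma>\<^sup>2 > 0" using s by simp
  have e1: "- (t - 0)\<^sup>2 / (2 * (\<sigma> / sqrt a)\<^sup>2) = - (t - 0)\<^sup>2 / (2 * \<sigma>\<^sup>2) + \<mu> * t\<^sup>2"
    unfolding s2 using ap s2p by (simp add: a_def field_simps)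
  have e2: "sqrt (2 * pi * (\<sigma> / sqrt a)\<^sup>2) = sqrt (2 * pi * \<sigma>\<^sup>2) / sqrt a"
    unfolding s2 using ap by (simp add: real_sqrt_divide real_sqrt_mult)
  have sa: "sqrt a > 0" using ap by simp
  have "(1 / sqrt a) * normal_density 0 (\<sigma> / sqrt a) t
      = (1 / sqrt a) * (sqrt a / sqrt (2 * pi * \<sigma>\<^sup>2)) * exp (- (t - 0)\<^sup>2 / (2 * \<sigma>\<^sup>2) + \<mu> * t\<^sup>2)"
    unfolding normal_density_def e1 e2 by simp
  also have "\<dots> = (1 / sqrt (2 * pi * \<sigma>\<^sup>2)) * (exp (- (t - 0)\<^sup>2 / (2 * \<sigma>\<^sup>2)) * exp (\<mu> * t\<^sup>2))"
  proof -
    have c1: "(1 / sqrt a) * (sqrt a / sqrt (2 * pi * \<sigma>\<^sup>2)) = 1 / sqrt (2 * pi * \<sigma>\<^sup>2)" using sa by simp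
    have c2: "exp (- (t - 0)\<^sup>2 / (2 * \<sigma>\<^sup>2) + \<mu> * t\<^sup>2) = exp (- (t - 0)\<^sup>2 / (2 * \<sigma>\<^sup>2)) * exp (\<mu> * t\<^sup>2)"
      by (rule exp_add)
    show ?thesis by (simp only: c1 c2)
  qed
  also have "\<dots> = exp (\<mu> * t\<^sup>2) * normal_density 0 \<sigma> t" by (simp only: normal_density_def ac_simps)
  finally show ?thesis unfolding a_def by simp
qed

lemma nn_integral_exp_sq_normal_density:
  fixes \<sigma> \<mu> :: real
  assumes s: "\<sigma> > 0" and a: "1 - 2 * \<mu> * \<sigma>\<^sup>2 > 0"
  shows "(\<integral>\<^sup>+t. ennreal (exp (\<mu> * t\<^sup>2)) * ennreal (normal_density 0 \<sigma> t) \<partial>lborel)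
       = ennreal (1 / sqrt (1 - 2 * \<mu> * \<sigma>\<^sup>2))"
proof -
  define a where "a = 1 - 2 * \<mu> * \<sigma>\<^sup>2"
  have ap: "a > 0" using a by (simp add: a_def)
  have s': "\<sigma> / sqrt a > 0" using s ap by simp
  have "(\<integral>\<^sup>+t. ennreal (exp (\<mu> * t\<^sup>2)) * ennreal (normal_density 0 \<sigma> t) \<partial>lborel)
      = (\<integral>\<^sup>+t. ennreal (1 / sqrt a) * ennreal (normal_density 0 (\<sigma> / sqrt a) t) \<partial>lborel)"
  proof (rule nn_integral_cong)
    fix t
    have "ennreal (exp (\<mu> * t\<^sup>2)) * ennreal (normal_density 0 \<sigma> t) = ennreal (exp (\<mu> * t\<^sup>2) * normal_density 0 \<sigma> t)"
      by (simp add: ennreal_mult normal_density_nonneg)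
    also have "\<dots> = ennreal ((1 / sqrt a) * normal_density 0 (\<sigma> / sqrt a) t)"
      using exp_sq_mult_normal_density[OF s a, of t] unfolding a_def by simp
    also have "\<dots> = ennreal (1 / sqrt a) * ennreal (normal_density 0 (\<sigma> / sqrt a) t)"
      using ap by (subst ennreal_mult[symmetric]) (auto simp: normal_density_nonneg)
    finally show "ennreal (exp (\<mu> * t\<^sup>2)) * ennreal (normal_density 0 \<sigma> t) = ennreal (1 / sqrt a) * ennreal (normal_density 0 (\<sigma> / sqrt a) t)" .
  qed
  also have "\<dots> = ennreal (1 / sqrt a) * (\<integral>\<^sup>+t. ennreal (normal_density 0 (\<sigma> / sqrt a) t) \<partial>lborel)"
    by (rule nn_integral_cmult) measurable
  also have "\<dots> = ennreal (1 / sqrt a)" using nn_integral_normal_density[OF s'] by simp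
  finally show ?thesis unfolding a_def .
qed

lemma nn_integral_exp_sq_col_resid:
  fixes S :: "real^('p::{finite,linorder})^('p::{finite,linorder})"
    and Xi :: "'w \<Rightarrow> real^('p::{finite,linorder})"
  assumes M: "prob_space M" and pd: "pos_def_mat S" and p: "\<pi> permutes UNIV"
    and dist: "distributed M lborel Xi (\<lambda>x. ennreal (gauss_density S x))"
    and a: "1 - 2 * \<mu> * Omtil S \<pi> $ j $ j > 0"
  shows "(\<integral>\<^sup>+\<omega>. ennreal (exp (\<mu> * (Xi \<omega> \<bullet> col_resid S \<pi> j)\<^sup>2)) \<partial>M)
       = ennreal (1 / sqrt (1 - 2 * \<mu> * Omtil S \<pi> $ j $ j))"
proof -
  define U where "U = mat 1 - Btil S \<pi>"
  have r: "inj (inv \<pi>)" using permutes_inj[OF permutes_inv[OF p]] .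
  note ldl = Btil_ldl[OF pd p, folded U_def]
  have D: "pos_diag (transpose U ** S ** U)" using ldl(2,3) by simp
  have Dj: "Omtil S \<pi> $ j $ j > 0" using ldl(3) unfolding pos_diag_def by blast
  have norm: "(\<integral>\<^sup>+x. ennreal (gauss_density S x) \<partial>lborel) = 1"
    using distributed_nn_integral[OF dist, of "\<lambda>_. 1"] prob_space.emeasure_space_1[OF M] by simp
  have coord: "x \<bullet> col_resid S \<pi> j = (x v* U) $ j" for x
    by (simp add: U_def col_resid_def column_def inner_vec_def vector_matrix_mult_def mult.commute)
  have "(\<lambda>x. ennreal (exp (\<mu> * (x \<bullet> col_resid S \<pi> j)\<^sup>2))) \<in> borel_measurable lborel"
    by measurable
  from distributed_nn_integral[OF dist this]
  have "(\<integral>\<^sup>+\<omega>. ennreal (exp (\<mu> * (Xi \<omega> \<bullet> col_resid S \<pi> j)\<^sup>2)) \<partial>M)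
      = (\<integral>\<^sup>+x. ennreal (exp (\<mu> * ((x v* U) $ j)\<^sup>2)) * ennreal (gauss_density S x) \<partial>lborel)"
    by (simp add: coord mult.commute)
  also have "\<dots> = (\<integral>\<^sup>+t. ennreal (exp (\<mu> * t\<^sup>2)) * ennreal (normal_density 0 (sqrt (Omtil S \<pi> $ j $ j)) t) \<partial>lborel)"
    using nn_integral_gauss_density_coordinate[OF r ldl(1) D norm, of "\<lambda>t. ennreal (exp (\<mu> * t\<^sup>2))"]
      ldl(2) by simp
  also have "\<dots> = ennreal (1 / sqrt (1 - 2 * \<mu> * Omtil S \<pi> $ j $ j))"
    using nn_integral_exp_sq_normal_density[of "sqrt (Omtil S \<pi> $ j $ j)" \<mu>] Dj a by simp
  finally show ?thesis .
qed

lemma nn_integral_exp_sum_sq_proj: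
  fixes S :: "real^('p::{finite,linorder})^('p::{finite,linorder})"
    and X :: "'w \<Rightarrow> nat \<Rightarrow> real^('p::{finite,linorder})"
  assumes M: "prob_space M" and pd: "pos_def_mat S" and p: "\<pi> permutes UNIV"
    and dist: "\<forall>i<n. distributed M lborel (\<lambda>\<omega>. X \<omega> i) (\<lambda>x. ennreal (gauss_density S x))"
    and ind: "prob_space.indep_vars M (\<lambda>_. borel) (\<lambda>i \<omega>. X \<omega> i) {..<n}"
    and a: "1 - 2 * \<mu> * Omtil S \<pi> $ j $ j > 0"
  shows "(\<integral>\<^sup>+\<omega>. ennreal (exp (\<mu> * sum_sq_proj n (X \<omega>) (col_resid S \<pi> j))) \<partial>M)
       = ennreal ((1 / sqrt (1 - 2 * \<mu> * Omtil S \<pi> $ j $ j)) ^ n)"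
proof -
  interpret prob_space M by (rule M)
  define h where "h = (\<lambda>x. ennreal (exp (\<mu> * (x \<bullet> col_resid S \<pi> j)\<^sup>2)))"
  have "h \<in> borel_measurable borel" unfolding h_def by measurable
  then have ind_h: "indep_vars (\<lambda>_. borel) (\<lambda>i \<omega>. h (X \<omega> i)) {..<n}"
    using indep_vars_compose2[OF ind] by simp
  have "(\<integral>\<^sup>+\<omega>. ennreal (exp (\<mu> * sum_sq_proj n (X \<omega>) (col_resid S \<pi> j))) \<partial>M)
      = (\<integral>\<^sup>+\<omega>. (\<Prod>i<n. h (X \<omega> i)) \<partial>M)"
    by (simp add: h_def sum_sq_proj_def sum_distrib_left exp_sum prod_ennreal)
  also have "\<dots> = (\<Prod>i<n. \<integral>\<^sup>+\<omega>. h (X \<omega> i) \<partial>M)"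
    by (rule indep_vars_nn_integral[OF _ ind_h]) auto
  also have "\<dots> = (\<Prod>i<n. ennreal (1 / sqrt (1 - 2 * \<mu> * Omtil S \<pi> $ j $ j)))"
    using dist nn_integral_exp_sq_col_resid[OF M pd p _ a] by (simp add: h_def)
  also have "\<dots> = ennreal ((1 / sqrt (1 - 2 * \<mu> * Omtil S \<pi> $ j $ j)) ^ n)"
    using a by (simp add: ennreal_power)
  finally show ?thesis .
qed

section \<open>Chi-square tail bounds\<close>

lemma borel_measurable_sum_sq_proj:
  fixes X :: "'w \<Rightarrow> nat \<Rightarrow> real^('p::finite)"
  assumes "\<forall>i<n. distributed M lborel (\<lambda>\<omega>. X \<omega> i) f"
  shows "(\<lambda>\<omega>. sum_sq_proj n (X \<omega>) v) \<in> borel_measurable M"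
proof -
  have X: "\<And>i. i < n \<Longrightarrow> (\<lambda>\<omega>. X \<omega> i) \<in> borel_measurable M"
    using assms distributed_measurable by (metis measurable_lborel1 measurable_cong_sets sets_lborel)
  show ?thesis unfolding sum_sq_proj_def by (intro borel_measurable_sum) (use X in measurable)
qed

lemma measure_le_exp_moment:
  assumes M: "prob_space M" and [measurable]: "Y \<in> borel_measurable M"
    and P: "\<And>\<omega>. P \<omega> \<Longrightarrow> \<theta> \<le> \<mu> * Y \<omega>" and sets: "{\<omega>\<in>space M. P \<omega>} \<in> sets M"
    and moment: "(\<integral>\<^sup>+\<omega>. ennreal (exp (\<mu> * Y \<omega>)) \<partial>M) = ennreal m" and "0 \<le> m"
  shows "measure M {\<omega>\<in>space M. P \<omega>} \<le> exp (- \<theta>) * m"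
proof -
  interpret prob_space M by (rule M)
  have "emeasure M {\<omega>\<in>space M. P \<omega>} = (\<integral>\<^sup>+\<omega>. indicator {\<omega>\<in>space M. P \<omega>} \<omega> \<partial>M)"
    using sets by simp
  also have "\<dots> \<le> (\<integral>\<^sup>+\<omega>. ennreal (exp (- \<theta>)) * ennreal (exp (\<mu> * Y \<omega>)) \<partial>M)"
  proof (rule nn_integral_mono)
    fix \<omega>
    have "P \<omega> \<Longrightarrow> 1 \<le> exp (- \<theta>) * exp (\<mu> * Y \<omega>)" using P[of \<omega>] by (simp add: exp_add[symmetric])
    then show "indicator {\<omega>\<in>space M. P \<omega>} \<omega> \<le> ennreal (exp (- \<theta>)) * ennreal (exp (\<mu> * Y \<omega>))"
      by (auto simp: indicator_def ennreal_mult[symmetric])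
  qed
  also have "\<dots> = ennreal (exp (- \<theta>) * m)"
    using moment \<open>0 \<le> m\<close> by (simp add: nn_integral_cmult ennreal_mult)
  finally show ?thesis using \<open>0 \<le> m\<close> by (simp add: emeasure_eq_measure)
qed

lemma inv_sqrt_power_eq_exp:
  assumes "y > 0" shows "(1 / sqrt y) ^ n = exp (- (real n / 2) * ln y)"
proof -
  have "1 / sqrt y = exp (- ln y / 2)"
    using assms by (simp add: powr_half_sqrt[symmetric] powr_def exp_minus field_simps)
  then show ?thesis by (simp add: exp_of_nat_mult[symmetric] field_simps)
qed

lemma chernoff_exponent_upper:
  assumes "0 \<le> s" "s \<le> 1/2"
  shows "exp (- (real n * s * (1 + 4 * s) / 2)) * (1 / sqrt (1 - s)) ^ n \<le> exp (- (real n * s\<^sup>2))"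
proof -
  have "- s - 2 * s\<^sup>2 \<le> ln (1 - s)" by (rule ln_one_minus_pos_lower_bound[OF assms])
  then have "real n / 2 * (- s - 2 * s\<^sup>2) \<le> real n / 2 * ln (1 - s)" by (intro mult_left_mono) auto
  then have "- (real n * s * (1 + 4 * s) / 2) - real n / 2 * ln (1 - s) \<le> - (real n * s\<^sup>2)"
    by (simp add: field_simps power2_eq_square)
  then show ?thesis using assms by (simp add: inv_sqrt_power_eq_exp exp_add[symmetric])
qed

lemma chernoff_exponent_lower:
  assumes "0 \<le> s" "s \<le> 1/2"
  shows "exp (3 * real n * s * (1 - 3 * s) / 4) * (1 / sqrt (1 + 3 * s / 2)) ^ n \<le> exp (- (real n * s\<^sup>2))"
proof -
  have "3 * s / 2 - (3 * s / 2)\<^sup>2 \<le> ln (1 + 3 * s / 2)"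
    by (rule ln_one_plus_pos_lower_bound) (use assms in auto)
  then have "real n / 2 * (3 * s / 2 - (3 * s / 2)\<^sup>2) \<le> real n / 2 * ln (1 + 3 * s / 2)"
    by (intro mult_left_mono) auto
  moreover have "0 \<le> real n * s\<^sup>2" by simp
  ultimately have "3 * real n * s * (1 - 3 * s) / 4 - real n / 2 * ln (1 + 3 * s / 2) \<le> - (real n * s\<^sup>2)"
    by (simp add: field_simps power2_eq_square)
  then show ?thesis using assms by (simp add: inv_sqrt_power_eq_exp exp_add[symmetric])
qed

lemma measure_sum_sq_proj_upper_tail:
  fixes S :: "real^('p::{finite,linorder})^('p::{finite,linorder})"
    and X :: "'w \<Rightarrow> nat \<Rightarrow> real^('p::{finite,linorder})"
  assumes M: "prob_space M" and pd: "pos_def_mat S" and p: "\<pi> permutes UNIV"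
    and dist: "\<forall>i<n. distributed M lborel (\<lambda>\<omega>. X \<omega> i) (\<lambda>x. ennreal (gauss_density S x))"
    and ind: "prob_space.indep_vars M (\<lambda>_. borel) (\<lambda>i \<omega>. X \<omega> i) {..<n}"
    and s: "0 \<le> s" "s < 1/2"
  shows "measure M {\<omega>\<in>space M. real n * (1 + 4 * s) * Omtil S \<pi> $ j $ j < sum_sq_proj n (X \<omega>) (col_resid S \<pi> j)}
      \<le> exp (- (real n * s\<^sup>2))"
proof -
  define \<sigma> where "\<sigma> = Omtil S \<pi> $ j $ j"
  have "\<sigma> > 0" using Btil_ldl(3)[OF pd p] unfolding \<sigma>_def pos_diag_def by blast
  define \<mu> where "\<mu> = s / (2 * \<sigma>)"
  have a: "1 - 2 * \<mu> * \<sigma> = 1 - s" using \<open>\<sigma> > 0\<close> by (simp add: \<mu>_def)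
  note [measurable] = borel_measurable_sum_sq_proj[OF dist]
  have "measure M {\<omega>\<in>space M. real n * (1 + 4 * s) * \<sigma> < sum_sq_proj n (X \<omega>) (col_resid S \<pi> j)}
      \<le> exp (- (\<mu> * (real n * (1 + 4 * s) * \<sigma>))) * (1 / sqrt (1 - s)) ^ n"
  proof (rule measure_le_exp_moment[OF M])
    show "(\<integral>\<^sup>+\<omega>. ennreal (exp (\<mu> * sum_sq_proj n (X \<omega>) (col_resid S \<pi> j))) \<partial>M)
        = ennreal ((1 / sqrt (1 - s)) ^ n)"
      using nn_integral_exp_sum_sq_proj[OF M pd p dist ind, of \<mu> j] s
      unfolding \<sigma>_def[symmetric] a by simp
    show "\<mu> * (real n * (1 + 4 * s) * \<sigma>) \<le> \<mu> * sum_sq_proj n (X \<omega>) (col_resid S \<pi> j)"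
      if "real n * (1 + 4 * s) * \<sigma> < sum_sq_proj n (X \<omega>) (col_resid S \<pi> j)" for \<omega>
      using that s \<open>\<sigma> > 0\<close> by (intro mult_left_mono) (auto simp: \<mu>_def)
  qed (use s in auto)
  also have "\<mu> * (real n * (1 + 4 * s) * \<sigma>) = real n * s * (1 + 4 * s) / 2"
    using \<open>\<sigma> > 0\<close> by (simp add: \<mu>_def field_simps)
  also have "exp (- (real n * s * (1 + 4 * s) / 2)) * (1 / sqrt (1 - s)) ^ n \<le> exp (- (real n * s\<^sup>2))"
    using chernoff_exponent_upper[of s n] s by simp
  finally show ?thesis unfolding \<sigma>_def .
qed

lemma measure_sum_sq_proj_lower_tail:
  fixes S :: "real^('p::{finite,linorder})^('p::{finite,linorder})"
    and X :: "'w \<Rightarrow> nat \<Rightarrow> real^('p::{finite,linorder})"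
  assumes M: "prob_space M" and pd: "pos_def_mat S" and p: "\<pi> permutes UNIV"
    and dist: "\<forall>i<n. distributed M lborel (\<lambda>\<omega>. X \<omega> i) (\<lambda>x. ennreal (gauss_density S x))"
    and ind: "prob_space.indep_vars M (\<lambda>_. borel) (\<lambda>i \<omega>. X \<omega> i) {..<n}"
    and s: "0 \<le> s" "s < 1/2"
  shows "measure M {\<omega>\<in>space M. sum_sq_proj n (X \<omega>) (col_resid S \<pi> j) < real n * (1 - 3 * s) * Omtil S \<pi> $ j $ j}
      \<le> exp (- (real n * s\<^sup>2))"
proof -
  define \<sigma> where "\<sigma> = Omtil S \<pi> $ j $ j"
  have "\<sigma> > 0" using Btil_ldl(3)[OF pd p] unfolding \<sigma>_def pos_diag_def by blast
  define \<mu> where "\<mu> = - (3 * s / (4 * \<sigma>))"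
  have a: "1 - 2 * \<mu> * \<sigma> = 1 + 3 * s / 2" using \<open>\<sigma> > 0\<close> by (simp add: \<mu>_def)
  note [measurable] = borel_measurable_sum_sq_proj[OF dist]
  have "measure M {\<omega>\<in>space M. sum_sq_proj n (X \<omega>) (col_resid S \<pi> j) < real n * (1 - 3 * s) * \<sigma>}
      \<le> exp (- (\<mu> * (real n * (1 - 3 * s) * \<sigma>))) * (1 / sqrt (1 + 3 * s / 2)) ^ n"
  proof (rule measure_le_exp_moment[OF M])
    show "(\<integral>\<^sup>+\<omega>. ennreal (exp (\<mu> * sum_sq_proj n (X \<omega>) (col_resid S \<pi> j))) \<partial>M)
        = ennreal ((1 / sqrt (1 + 3 * s / 2)) ^ n)"
      using nn_integral_exp_sum_sq_proj[OF M pd p dist ind, of \<mu> j] s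
      unfolding \<sigma>_def[symmetric] a by simp
    show "\<mu> * (real n * (1 - 3 * s) * \<sigma>) \<le> \<mu> * sum_sq_proj n (X \<omega>) (col_resid S \<pi> j)"
      if "sum_sq_proj n (X \<omega>) (col_resid S \<pi> j) < real n * (1 - 3 * s) * \<sigma>" for \<omega>
      using that s \<open>\<sigma> > 0\<close> by (intro mult_left_mono_neg) (auto simp: \<mu>_def)
  qed (use s in auto)
  also have "- (\<mu> * (real n * (1 - 3 * s) * \<sigma>)) = 3 * real n * s * (1 - 3 * s) / 4"
    using \<open>\<sigma> > 0\<close> by (simp add: \<mu>_def field_simps)
  also have "exp (3 * real n * s * (1 - 3 * s) / 4) * (1 / sqrt (1 + 3 * s / 2)) ^ n \<le> exp (- (real n * s\<^sup>2))"
    using chernoff_exponent_lower[of s n] s by simp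
  finally show ?thesis unfolding \<sigma>_def .
qed

section \<open>The loss gap\<close>

text \<open>When \<open>3 s > 1\<close> the lower bounds are vacuous and the upper bound alone suffices.\<close>

lemma lossF_gap_le:
  fixes S :: "real^('p::{finite,linorder})^('p::{finite,linorder})"
  assumes pd: "pos_def_mat S" and mt: "min_trace_perm S \<pi>0" and p: "\<pi> permutes UNIV"
    and n: "n > 0" and s: "0 \<le> s"
    and up: "\<And>j. sum_sq_proj n x (col_resid S \<pi>0 j) \<le> real n * (1 + 4 * s) * Omtil S \<pi>0 $ j $ j"
    and lo: "\<And>j. real n * (1 - 3 * s) * Omtil S \<pi> $ j $ j \<le> sum_sq_proj n x (col_resid S \<pi> j)"
  shows "lossF n x (Btil S \<pi>0) - lossF n x (Btil S \<pi>) \<le> 7 * s * trace (Omtil S \<pi>0)"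
proof -
  define T0 where "T0 = trace (Omtil S \<pi>0)"
  define Y0 where "Y0 = (\<Sum>j\<in>UNIV. sum_sq_proj n x (col_resid S \<pi>0 j))"
  define Y where "Y = (\<Sum>j\<in>UNIV. sum_sq_proj n x (col_resid S \<pi> j))"
  have "T0 \<le> trace (Omtil S \<pi>)" using mt p unfolding min_trace_perm_def T0_def by blast
  have "\<pi>0 permutes UNIV" using mt unfolding min_trace_perm_def by blast
  then have "Omtil S \<pi>0 $ i $ i > 0" for i using Btil_ldl(3)[OF pd] unfolding pos_diag_def by blast
  then have "0 \<le> T0" unfolding T0_def trace_def by (simp add: sum_nonneg less_imp_le)
  have Y0: "Y0 \<le> real n * (1 + 4 * s) * T0"
    unfolding Y0_def T0_def trace_def sum_distrib_left by (rule sum_mono) (rule up)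
  have Y: "real n * (1 - 3 * s) * trace (Omtil S \<pi>) \<le> Y"
    unfolding Y_def trace_def sum_distrib_left by (rule sum_mono) (rule lo)
  have "0 \<le> Y" unfolding Y_def sum_sq_proj_def by (intro sum_nonneg) simp
  have "Y0 - Y \<le> 14 * s * (real n * T0)"
  proof (cases "3 * s \<le> 1")
    case True
    then have "real n * (1 - 3 * s) * T0 \<le> real n * (1 - 3 * s) * trace (Omtil S \<pi>)"
      using \<open>T0 \<le> trace (Omtil S \<pi>)\<close> by (intro mult_left_mono) auto
    then have "Y0 - Y \<le> 7 * s * (real n * T0)" using Y0 Y by (simp add: algebra_simps)
    also have "\<dots> \<le> 14 * s * (real n * T0)" using s \<open>0 \<le> T0\<close> by (intro mult_right_mono) auto
    finally show ?thesis .
  next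
    case False
    then have "(1 + 4 * s) * (real n * T0) \<le> 14 * s * (real n * T0)"
      using \<open>0 \<le> T0\<close> by (intro mult_right_mono) auto
    then show ?thesis using Y0 \<open>0 \<le> Y\<close> by (simp add: algebra_simps)
  qed
  then show ?thesis using n unfolding lossF_Btil Y0_def[symmetric] Y_def[symmetric] T0_def[symmetric]
    by (simp add: diff_divide_distrib[symmetric] divide_le_eq algebra_simps)
qed

definition excess_event ::
    "'w measure \<Rightarrow> ('w \<Rightarrow> nat \<Rightarrow> real^('p::{finite,linorder})) \<Rightarrow> real^('p::{finite,linorder})^('p::{finite,linorder}) \<Rightarrow> (('p::{finite,linorder}) \<Rightarrow> ('p::{finite,linorder})) \<Rightarrow> nat \<Rightarrow> real \<Rightarrow> 'w set" where
  "excess_event M X S \<pi> n s = (\<Union>j. {\<omega>\<in>space M.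
     real n * (1 + 4 * s) * Omtil S \<pi> $ j $ j < sum_sq_proj n (X \<omega>) (col_resid S \<pi> j)})"

text \<open>The estimated permutation is random, so the lower deviations are controlled for all candidate
  columns at once; \<open>card_col_resid_set_le\<close> keeps this union small.\<close>

definition deficit_event ::
    "'w measure \<Rightarrow> ('w \<Rightarrow> nat \<Rightarrow> real^('p::{finite,linorder})) \<Rightarrow> real^('p::{finite,linorder})^('p::{finite,linorder}) \<Rightarrow> nat \<Rightarrow> real \<Rightarrow> 'w set" where
  "deficit_event M X S n s = (\<Union>j. \<Union>v\<in>col_resid_set S j. {\<omega>\<in>space M.
     sum_sq_proj n (X \<omega>) v < real n * (1 - 3 * s) * (v \<bullet> (S *v v))})"

lemma excess_deficit_event_sets:
  assumes "\<forall>i<n. distributed M lborel (\<lambda>\<omega>. X \<omega> i) f"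
  shows "excess_event M X S \<pi> n s \<in> sets M" "deficit_event M X S n s \<in> sets M"
proof -
  note [measurable] = borel_measurable_sum_sq_proj[OF assms]
  show "excess_event M X S \<pi> n s \<in> sets M" unfolding excess_event_def by measurable
  show "deficit_event M X S n s \<in> sets M" unfolding deficit_event_def
    by (intro sets.finite_UN finite_col_resid_set) measurable
qed

lemma lossF_gap_event_subset:
  fixes S :: "real^('p::{finite,linorder})^('p::{finite,linorder})"
  assumes pd: "pos_def_mat S" and mt: "min_trace_perm S \<pi>0"
    and n: "n > 0" and s: "0 \<le> s" and pihat: "\<forall>\<omega>\<in>space M. pihat \<omega> permutes UNIV"
    and c: "7 * s * trace (Omtil S \<pi>0) \<le> c"
  shows "{\<omega>\<in>space M. lossF n (X \<omega>) (Btil S \<pi>0) - lossF n (X \<omega>) (Btil S (pihat \<omega>)) > c}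
    \<subseteq> excess_event M X S \<pi>0 n s \<union> deficit_event M X S n s"
proof (rule subsetI, rule ccontr)
  fix \<omega>
  assume gap: "\<omega> \<in> {\<omega>\<in>space M. lossF n (X \<omega>) (Btil S \<pi>0) - lossF n (X \<omega>) (Btil S (pihat \<omega>)) > c}"
    and "\<omega> \<notin> excess_event M X S \<pi>0 n s \<union> deficit_event M X S n s"
  then have \<omega>: "\<omega> \<in> space M" and excess: "\<omega> \<notin> excess_event M X S \<pi>0 n s"
    and deficit: "\<omega> \<notin> deficit_event M X S n s" by auto
  define \<pi> where "\<pi> = pihat \<omega>"
  have p: "\<pi> permutes UNIV" using pihat \<omega> by (simp add: \<pi>_def)
  have "lossF n (X \<omega>) (Btil S \<pi>0) - lossF n (X \<omega>) (Btil S \<pi>) \<le> 7 * s * trace (Omtil S \<pi>0)"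
  proof (rule lossF_gap_le[OF pd mt p n s])
    show "sum_sq_proj n (X \<omega>) (col_resid S \<pi>0 j) \<le> real n * (1 + 4 * s) * Omtil S \<pi>0 $ j $ j" for j
      using \<omega> excess unfolding excess_event_def by (auto simp: not_less)
    show "real n * (1 - 3 * s) * Omtil S \<pi> $ j $ j \<le> sum_sq_proj n (X \<omega>) (col_resid S \<pi> j)" for j
    proof -
      have "col_resid S \<pi> j \<in> col_resid_set S j" unfolding col_resid_set_def using p by blast
      then have "\<not> sum_sq_proj n (X \<omega>) (col_resid S \<pi> j)
          < real n * (1 - 3 * s) * (col_resid S \<pi> j \<bullet> (S *v col_resid S \<pi> j))"
        using \<omega> deficit unfolding deficit_event_def by blast
      then show ?thesis by (simp add: quadratic_form_col_resid[OF pd p] not_less)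
    qed
  qed
  then show False using gap c by (simp add: \<pi>_def)
qed

lemma measure_excess_event_le:
  fixes S :: "real^('p::{finite,linorder})^('p::{finite,linorder})"
    and X :: "'w \<Rightarrow> nat \<Rightarrow> real^('p::{finite,linorder})"
  assumes M: "prob_space M" and pd: "pos_def_mat S" and p: "\<pi> permutes UNIV"
    and dist: "\<forall>i<n. distributed M lborel (\<lambda>\<omega>. X \<omega> i) (\<lambda>x. ennreal (gauss_density S x))"
    and ind: "prob_space.indep_vars M (\<lambda>_. borel) (\<lambda>i \<omega>. X \<omega> i) {..<n}"
    and s: "0 \<le> s" "s < 1/2"
  shows "measure M (excess_event M X S \<pi> n s) \<le> real CARD('p) * exp (- (real n * s\<^sup>2))"
proof -
  note [measurable] = borel_measurable_sum_sq_proj[OF dist]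
  have "measure M (excess_event M X S \<pi> n s) \<le> (\<Sum>j\<in>UNIV. measure M {\<omega>\<in>space M.
      real n * (1 + 4 * s) * Omtil S \<pi> $ j $ j < sum_sq_proj n (X \<omega>) (col_resid S \<pi> j)})"
    unfolding excess_event_def by (rule measure_UNION_le) auto
  also have "\<dots> \<le> (\<Sum>j\<in>(UNIV::'p set). exp (- (real n * s\<^sup>2)))"
    by (rule sum_mono) (rule measure_sum_sq_proj_upper_tail[OF M pd p dist ind s])
  finally show ?thesis by simp
qed

lemma measure_deficit_event_le:
  fixes S :: "real^('p::{finite,linorder})^('p::{finite,linorder})"
    and X :: "'w \<Rightarrow> nat \<Rightarrow> real^('p::{finite,linorder})"
  assumes M: "prob_space M" and pd: "pos_def_mat S"
    and dist: "\<forall>i<n. distributed M lborel (\<lambda>\<omega>. X \<omega> i) (\<lambda>x. ennreal (gauss_density S x))"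
    and ind: "prob_space.indep_vars M (\<lambda>_. borel) (\<lambda>i \<omega>. X \<omega> i) {..<n}"
    and s: "0 \<le> s" "s < 1/2"
  shows "measure M (deficit_event M X S n s) \<le> real CARD('p) ^ Suc (dmax S) * exp (- (real n * s\<^sup>2))"
proof -
  note [measurable] = borel_measurable_sum_sq_proj[OF dist]
  define e where "e = exp (- (real n * s\<^sup>2))"
  define Lo where "Lo = (\<lambda>v. {\<omega>\<in>space M. sum_sq_proj n (X \<omega>) v < real n * (1 - 3 * s) * (v \<bullet> (S *v v))})"
  have [measurable]: "Lo v \<in> sets M" for v unfolding Lo_def by measurable
  have column: "measure M (\<Union>v\<in>col_resid_set S j. Lo v) \<le> real CARD('p) ^ dmax S * e" for j
  proof -
    have "measure M (\<Union>v\<in>col_resid_set S j. Lo v) \<le> (\<Sum>v\<in>col_resid_set S j. measure M (Lo v))"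
      by (rule measure_UNION_le) (auto simp: finite_col_resid_set)
    also have "\<dots> \<le> (\<Sum>v\<in>col_resid_set S j. e)"
    proof (rule sum_mono)
      fix v assume "v \<in> col_resid_set S j"
      then obtain \<pi> where p: "\<pi> permutes UNIV" and v: "v = col_resid S \<pi> j"
        unfolding col_resid_set_def by blast
      show "measure M (Lo v) \<le> e" using measure_sum_sq_proj_lower_tail[OF M pd p dist ind s, of j]
        unfolding Lo_def e_def v quadratic_form_col_resid[OF pd p] .
    qed
    also have "\<dots> \<le> real CARD('p) ^ dmax S * e"
      using card_col_resid_set_le[OF pd, of j]
      by (simp add: e_def mult_right_mono of_nat_le_iff[symmetric])
    finally show ?thesis .
  qed
  have "measure M (deficit_event M X S n s) \<le> (\<Sum>j\<in>UNIV. measure M (\<Union>v\<in>col_resid_set S j. Lo v))"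
    unfolding deficit_event_def Lo_def[symmetric]
    by (rule measure_UNION_le) (auto simp: finite_col_resid_set)
  also have "\<dots> \<le> (\<Sum>j\<in>(UNIV::'p set). real CARD('p) ^ dmax S * e)" by (rule sum_mono) (rule column)
  finally show ?thesis by (simp add: e_def)
qed

lemma measure_excess_deficit_le:
  fixes S :: "real^('p::{finite,linorder})^('p::{finite,linorder})"
    and X :: "'w \<Rightarrow> nat \<Rightarrow> real^('p::{finite,linorder})"
  assumes M: "prob_space M" and pd: "pos_def_mat S" and p: "\<pi> permutes UNIV"
    and dist: "\<forall>i<n. distributed M lborel (\<lambda>\<omega>. X \<omega> i) (\<lambda>x. ennreal (gauss_density S x))"
    and ind: "prob_space.indep_vars M (\<lambda>_. borel) (\<lambda>i \<omega>. X \<omega> i) {..<n}"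
    and s: "0 \<le> s" "s < 1/2"
  shows "measure M (excess_event M X S \<pi> n s \<union> deficit_event M X S n s)
    \<le> 2 * (real CARD('p) ^ Suc (dmax S) * exp (- (real n * s\<^sup>2)))"
proof -
  have "real CARD('p) * exp (- (real n * s\<^sup>2)) \<le> real CARD('p) ^ Suc (dmax S) * exp (- (real n * s\<^sup>2))"
    by (intro mult_right_mono) simp_all
  moreover have "measure M (excess_event M X S \<pi> n s \<union> deficit_event M X S n s)
      \<le> measure M (excess_event M X S \<pi> n s) + measure M (deficit_event M X S n s)"
    using excess_deficit_event_sets[OF dist] by (intro measure_Un_le)
  ultimately show ?thesis
    using measure_excess_event_le[OF M pd p dist ind s]
      measure_deficit_event_le[OF M pd dist ind s]
    by linarith
qed

lemma seven_sqrt_le_of_sqrt_fifty: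
  fixes T \<delta> P x :: real
  assumes "T > 0" "\<delta> > 0" "0 \<le> x" and "P / T \<ge> (1 / \<delta>) * sqrt (50 * x)"
  shows "7 * sqrt x * T \<le> \<delta> * P"
proof -
  have "7 \<le> sqrt 50" by (rule real_le_rsqrt) simp
  then have "7 * sqrt x \<le> sqrt 50 * sqrt x" using assms(3) by (intro mult_right_mono) simp_all
  also have "\<dots> = sqrt (50 * x)" by (simp add: real_sqrt_mult)
  also have "\<dots> \<le> \<delta> * P / T" using assms(2,4) by (simp add: field_simps)
  finally show ?thesis using assms(1) by (simp add: field_simps)
qed

lemma power_mult_exp_eq:
  assumes "p > 0"
  shows "p ^ Suc d * exp (- ((C + 1) * (real d + 1) * ln p)) = exp (- C * (real d + 1) * ln p)"
proof -
  have "exp ((real d + 1) * ln p) = exp (ln p) ^ Suc d"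
    using exp_of_nat_mult[of "Suc d" "ln p"] by (simp add: add.commute)
  then have "p ^ Suc d = exp ((real d + 1) * ln p)" using assms by simp
  then show ?thesis by (simp add: exp_add[symmetric] algebra_simps)
qed

lemma sqrt_ratio_lt_half:
  fixes t :: real
  assumes "0 \<le> t" and "4 * t < real n"
  shows "n > 0" "0 \<le> sqrt (t / real n)" "sqrt (t / real n) < 1/2" "real n * (sqrt (t / real n))\<^sup>2 = t"
proof -
  show n: "n > 0" using assms by simp
  show "0 \<le> sqrt (t / real n)" and ns: "real n * (sqrt (t / real n))\<^sup>2 = t" using assms(1) n by simp_all
  have "real n * (sqrt (t / real n))\<^sup>2 < real n * (1/2)\<^sup>2" using ns assms(2) by (simp add: power2_eq_square)
  then have "(sqrt (t / real n))\<^sup>2 < (1/2)\<^sup>2" using n by simp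
  then show "sqrt (t / real n) < 1/2" by (rule power_less_imp_less_base) simp
qed

theorem proposition8:
  fixes M :: "'w measure"
    and S :: "real^('p::{finite,linorder})^('p::{finite,linorder})"
    and n :: nat
    and X :: "'w \<Rightarrow> nat \<Rightarrow> real^('p::{finite,linorder})"
    and \<rho> :: "real \<Rightarrow> real"
    and Bhat :: "'w \<Rightarrow> real^('p::{finite,linorder})^('p::{finite,linorder})"
    and pihat :: "'w \<Rightarrow> ('p::{finite,linorder}) \<Rightarrow> ('p::{finite,linorder})"
    and C \<delta>0 :: real
    and \<pi>0 :: "('p::{finite,linorder}) \<Rightarrow> ('p::{finite,linorder})"
  assumes "prob_space M"
    and "pos_def_mat S"
    and "\<forall>i<n. distributed M lborel (\<lambda>\<omega>. X \<omega> i) (\<lambda>x. ennreal (gauss_density S x))"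
    and "prob_space.indep_vars M (\<lambda>_. borel) (\<lambda>i \<omega>. X \<omega> i) {..<n}"
    and "\<forall>t\<ge>0. \<rho> t \<ge> 0"
    and "\<forall>\<omega>\<in>space M. Bhat \<omega> \<in> DAGs \<and>
           (\<forall>B\<in>DAGs. Qobj n (X \<omega>) \<rho> (Bhat \<omega>) \<le> Qobj n (X \<omega>) \<rho> B)"
    and "\<forall>\<omega>\<in>space M. pihat \<omega> \<in> Pi_hat (Bhat \<omega>)"
    and "C > 0" and "\<delta>0 > 0"
    and "real n > 4 * (C + 1) * (real (dmax S) + 1) * ln (real CARD('p))"
    and "min_trace_perm S \<pi>0"
    and "pen \<rho> (Btil S \<pi>0) / trace (Omtil S \<pi>0) \<ge>
           (1 / \<delta>0) * sqrt (50 * (C + 1) * (real (dmax S) + 1) * ln (real CARD('p)) / real n)"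
  shows "\<exists>A\<in>sets M.
           {\<omega>\<in>space M. lossF n (X \<omega>) (Btil S \<pi>0) - lossF n (X \<omega>) (Btil S (pihat \<omega>))
                          > \<delta>0 * pen \<rho> (Btil S \<pi>0)} \<subseteq> A
         \<and> measure M A \<le> 2 * exp (- C * (real (dmax S) + 1) * ln (real CARD('p)))"
proof -
  note M = assms(1) and pd = assms(2) and dist = assms(3) and ind = assms(4) and mt = assms(11)
  define t where "t = (C + 1) * (real (dmax S) + 1) * ln (real CARD('p))"
  define s where "s = sqrt (t / real n)"
  have "0 \<le> t" using \<open>C > 0\<close> by (simp add: t_def)
  moreover have "4 * t < real n" using assms(10) by (simp only: t_def mult.assoc)
  ultimately have n: "n > 0" and s: "0 \<le> s" "s < 1/2" and ns: "real n * s\<^sup>2 = t"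
    unfolding s_def by (rule sqrt_ratio_lt_half)+
  have p0: "\<pi>0 permutes UNIV" using mt unfolding min_trace_perm_def by blast
  have "trace (Omtil S \<pi>0) > 0"
    using Btil_ldl(3)[OF pd p0] unfolding trace_def pos_diag_def by (simp add: sum_pos)
  moreover have "pen \<rho> (Btil S \<pi>0) / trace (Omtil S \<pi>0) \<ge> 1 / \<delta>0 * sqrt (50 * (t / real n))"
    using assms(12) by (simp only: t_def times_divide_eq_right mult.assoc)
  ultimately have gap: "7 * s * trace (Omtil S \<pi>0) \<le> \<delta>0 * pen \<rho> (Btil S \<pi>0)"
    unfolding s_def using seven_sqrt_le_of_sqrt_fifty \<open>\<delta>0 > 0\<close> \<open>0 \<le> t\<close> n by simp
  have "\<forall>\<omega>\<in>space M. pihat \<omega> permutes UNIV" using assms(7) by (simp add: Pi_hat_def)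
  from lossF_gap_event_subset[OF pd mt n s(1) this gap]
  have "{\<omega>\<in>space M. lossF n (X \<omega>) (Btil S \<pi>0) - lossF n (X \<omega>) (Btil S (pihat \<omega>))
      > \<delta>0 * pen \<rho> (Btil S \<pi>0)} \<subseteq> excess_event M X S \<pi>0 n s \<union> deficit_event M X S n s" .
  moreover have "measure M (excess_event M X S \<pi>0 n s \<union> deficit_event M X S n s)
      \<le> 2 * exp (- C * (real (dmax S) + 1) * ln (real CARD('p)))"
    using measure_excess_deficit_le[OF M pd p0 dist ind s] power_mult_exp_eq[of "real CARD('p)" "dmax S" C]
    by (simp only: ns t_def) simp
  ultimately show ?thesis using excess_deficit_event_sets[OF dist] by blast
qed

end
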